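(* Let $k$ be a field of characteristic $p>2$ ($p$ prime). For each $m\ge1$, $w_m\notin S^2+T(G_0)$.
   Context: $X=\{x_i\mid i\ge0\}$ is countably infinite; $k_0\langle X\rangle$ is the free nonunitary associative $k$-algebra on $X$. $[a,b]=ab-ba$. $S^2$ is the $T$-space of $k_0\langle X\rangle$ (smallest subspace containing it and invariant under all endomorphisms) generated by $[x_1,x_2]$. $\kappa(u,v)=[u,v]u^{p-1}v^{p-1}$ and $w_m=\prod_{r=1}^m\kappa(x_{2r-1},x_{2r})$. $G_0$ is the infinite-dimensional nonunitary Grassmann algebra over $k$ (basis the products $e_{i_1}\cdots e_{i_n}$, $n\ge1$, $i_1<\dots<i_n$, with $e_ie_j=-e_je_i$, $e_i^2=0$), and $T(G_0)$ is the set of $f\in k_0\langle X\rangle$ in the kernel of every homomorphism $k_0\langle X\rangle\to G_0$. *)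

theory Defs
  imports Main "HOL-Computational_Algebra.Primes"
begin

text \<open>An element is a finitely supported coefficient function on words over nat
  (word [i1,...,in] stands for the monomial x_i1 ... x_in), vanishing on the empty word
  (nonunitary).\<close>

type_synonym 'k fa = "nat list \<Rightarrow> 'k"

definition FA :: "'k::field fa set" where
  "FA = {f. finite {w. f w \<noteq> 0} \<and> f [] = 0}"

definition fa_var :: "nat \<Rightarrow> 'k::field fa" where
  "fa_var i = (\<lambda>w. if w = [i] then 1 else 0)"

definition fa_add :: "'k::field fa \<Rightarrow> 'k fa \<Rightarrow> 'k fa" where
  "fa_add f g = (\<lambda>w. f w + g w)"

definition fa_smult :: "'k::field \<Rightarrow> 'k fa \<Rightarrow> 'k fa" where
  "fa_smult c f = (\<lambda>w. c * f w)"

definition fa_mult :: "'k::field fa \<Rightarrow> 'k fa \<Rightarrow> 'k fa" where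
  "fa_mult f g = (\<lambda>w. \<Sum>n\<in>{..length w}. f (take n w) * g (drop n w))"

definition fa_comm :: "'k::field fa \<Rightarrow> 'k fa \<Rightarrow> 'k fa" where
  "fa_comm f g = fa_add (fa_mult f g) (fa_smult (-1) (fa_mult g f))"

text \<open>Positive powers: fa_pow f n = f^n for n >= 1 (junk value 0 at n = 0).\<close>
fun fa_pow :: "'k::field fa \<Rightarrow> nat \<Rightarrow> 'k fa" where
  "fa_pow f 0 = (\<lambda>_. 0)"
| "fa_pow f (Suc 0) = f"
| "fa_pow f (Suc (Suc n)) = fa_mult f (fa_pow f (Suc n))"

definition kappa :: "nat \<Rightarrow> 'k::field fa \<Rightarrow> 'k fa \<Rightarrow> 'k fa" where
  "kappa p u v = fa_mult (fa_mult (fa_comm u v) (fa_pow u (p - 1))) (fa_pow v (p - 1))"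

text \<open>w_m = prod_{r=1}^m kappa(x_{2r-1}, x_{2r}) (junk value 0 at m = 0).\<close>
fun w_elt :: "nat \<Rightarrow> nat \<Rightarrow> 'k::field fa" where
  "w_elt p 0 = (\<lambda>_. 0)"
| "w_elt p (Suc 0) = kappa p (fa_var 1) (fa_var 2)"
| "w_elt p (Suc (Suc m)) =
     fa_mult (w_elt p (Suc m)) (kappa p (fa_var (2 * Suc (Suc m) - 1)) (fa_var (2 * Suc (Suc m))))"

definition fa_subspace :: "'k::field fa set \<Rightarrow> bool" where
  "fa_subspace V \<longleftrightarrow> V \<subseteq> FA \<and> (\<lambda>_. 0) \<in> V \<and>
     (\<forall>f\<in>V. \<forall>g\<in>V. fa_add f g \<in> V) \<and> (\<forall>c. \<forall>f\<in>V. fa_smult c f \<in> V)"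

definition fa_endo :: "('k::field fa \<Rightarrow> 'k fa) \<Rightarrow> bool" where
  "fa_endo \<phi> \<longleftrightarrow> (\<forall>f\<in>FA. \<phi> f \<in> FA) \<and>
     (\<forall>f\<in>FA. \<forall>g\<in>FA. \<phi> (fa_add f g) = fa_add (\<phi> f) (\<phi> g)) \<and>
     (\<forall>c. \<forall>f\<in>FA. \<phi> (fa_smult c f) = fa_smult c (\<phi> f)) \<and>
     (\<forall>f\<in>FA. \<forall>g\<in>FA. \<phi> (fa_mult f g) = fa_mult (\<phi> f) (\<phi> g))"

definition S2 :: "'k::field fa set" where
  "S2 = \<Inter>{V. fa_subspace V \<and> fa_comm (fa_var 1) (fa_var 2) \<in> V \<and>
              (\<forall>\<phi>. fa_endo \<phi> \<longrightarrow> \<phi> ` V \<subseteq> V)}"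

text \<open>An element is a finitely supported coefficient function on finite nonempty sets
  {i1 < ... < in} of indices (standing for e_i1 ... e_in).\<close>

type_synonym 'k gr = "nat set \<Rightarrow> 'k"

definition G0 :: "'k::field gr set" where
  "G0 = {a. finite {A. a A \<noteq> 0} \<and> (\<forall>A. a A \<noteq> 0 \<longrightarrow> finite A \<and> A \<noteq> {})}"

definition gr_add :: "'k::field gr \<Rightarrow> 'k gr \<Rightarrow> 'k gr" where
  "gr_add a b = (\<lambda>A. a A + b A)"

definition gr_smult :: "'k::field \<Rightarrow> 'k gr \<Rightarrow> 'k gr" where
  "gr_smult c a = (\<lambda>A. c * a A)"

text \<open>Sign of e_A e_B = sign * e_{A union B} for disjoint A, B: number of inversions.\<close>
definition gr_sign :: "nat set \<Rightarrow> nat set \<Rightarrow> 'k::field" where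
  "gr_sign A B = (-1) ^ card {(i, j). i \<in> A \<and> j \<in> B \<and> j < i}"

definition gr_mult :: "'k::field gr \<Rightarrow> 'k gr \<Rightarrow> 'k gr" where
  "gr_mult a b = (\<lambda>C. if finite C then
      (\<Sum>A\<in>{A. A \<subseteq> C \<and> A \<noteq> {} \<and> A \<noteq> C}. gr_sign A (C - A) * a A * b (C - A))
    else 0)"

definition fa_gr_hom :: "('k::field fa \<Rightarrow> 'k gr) \<Rightarrow> bool" where
  "fa_gr_hom \<phi> \<longleftrightarrow> (\<forall>f\<in>FA. \<phi> f \<in> G0) \<and>
     (\<forall>f\<in>FA. \<forall>g\<in>FA. \<phi> (fa_add f g) = gr_add (\<phi> f) (\<phi> g)) \<and>
     (\<forall>c. \<forall>f\<in>FA. \<phi> (fa_smult c f) = gr_smult c (\<phi> f)) \<and>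
     (\<forall>f\<in>FA. \<forall>g\<in>FA. \<phi> (fa_mult f g) = gr_mult (\<phi> f) (\<phi> g))"

definition TG0 :: "'k::field fa set" where
  "TG0 = {f\<in>FA. \<forall>\<phi>. fa_gr_hom \<phi> \<longrightarrow> \<phi> f = (\<lambda>_. 0)}"

definition S2_plus_TG0 :: "'k::field fa set" where
  "S2_plus_TG0 = {fa_add a b | a b. a \<in> S2 \<and> b \<in> TG0}"

end

theory Submission
  imports Defs "HOL-Library.Function_Algebras"
begin

text \<open>Substitute x_t := e_t + (SUM j < p-1. e_a(t,j) e_a(t,j)+1) for 1 <= t <= 2m, and x_t := 0
  otherwise, with fresh indices a(t,j) > 2m. This is a homomorphism into G_0, so the coefficient
  lambda(f) of the monomial e_E, E the set of all indices involved, is a linear functional vanishing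
  on T(G_0). The pairs are central, so in a word w each occurrence of x_t contributes either e_t or
  one of the p - 1 pairs of t: lambda(w) vanishes unless every x_t occurs exactly p times, and then
  it is ((p-1)!)^(2m) times the coefficient of e_1 ... e_2m in the product of the 1 + e_t along w.
  For words u, v of joint multidegree p in every variable these products commute in characteristic p,
  hence lambda(uv) = lambda(vu), and lambda vanishes on all substitution instances of [x_1, x_2],
  that is on S^2. But lambda(w_m) = ((p-1)!)^(2m) 2^m is nonzero.\<close>

definition fa_supp :: "'k::field fa \<Rightarrow> nat list set" where
  "fa_supp f = {w. f w \<noteq> 0}"

lemma finite_fa_supp: "f \<in> FA \<Longrightarrow> finite (fa_supp f)"
  and FA_Nil: "f \<in> FA \<Longrightarrow> f [] = 0"
  by (simp_all add: FA_def fa_supp_def)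

lemma sum_fa_supp_superset:
  assumes "finite S" "fa_supp f \<subseteq> S"
  shows "(\<Sum>w\<in>fa_supp f. f w * \<phi> w) = (\<Sum>w\<in>S. f w * \<phi> w)"
  by (rule sum.mono_neutral_left) (use assms in \<open>auto simp: fa_supp_def\<close>)

lemma fa_mult_nonzero:
  assumes "fa_mult f g w \<noteq> 0"
  obtains n where "n \<le> length w" "f (take n w) \<noteq> 0" "g (drop n w) \<noteq> 0"
proof -
  obtain n where "n \<in> {..length w}" "f (take n w) * g (drop n w) \<noteq> 0"
    using assms unfolding fa_mult_def by (meson sum.neutral)
  with that show ?thesis by auto
qed

lemma fa_supp_fa_mult:
  "fa_supp (fa_mult f g) \<subseteq> (\<lambda>(u, v). u @ v) ` (fa_supp f \<times> fa_supp g)"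
proof
  fix w
  assume "w \<in> fa_supp (fa_mult f g)"
  then obtain n where "f (take n w) \<noteq> 0" "g (drop n w) \<noteq> 0"
    by (auto simp: fa_supp_def elim: fa_mult_nonzero)
  then have "(take n w, drop n w) \<in> fa_supp f \<times> fa_supp g"
    by (simp add: fa_supp_def)
  then have "(\<lambda>(u, v). u @ v) (take n w, drop n w) \<in> (\<lambda>(u, v). u @ v) ` (fa_supp f \<times> fa_supp g)"
    by (rule imageI)
  then show "w \<in> (\<lambda>(u, v). u @ v) ` (fa_supp f \<times> fa_supp g)"
    by simp
qed

lemma FA_add: "f \<in> FA \<Longrightarrow> g \<in> FA \<Longrightarrow> fa_add f g \<in> FA"
proof -
  assume "f \<in> FA" "g \<in> FA"
  moreover have "{w. fa_add f g w \<noteq> 0} \<subseteq> {w. f w \<noteq> 0} \<union> {w. g w \<noteq> 0}"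
    by (auto simp: fa_add_def)
  ultimately show ?thesis
    by (auto simp: FA_def fa_add_def intro: finite_subset)
qed

lemma FA_smult: "f \<in> FA \<Longrightarrow> fa_smult c f \<in> FA"
proof -
  assume "f \<in> FA"
  moreover have "{w. fa_smult c f w \<noteq> 0} \<subseteq> {w. f w \<noteq> 0}"
    by (auto simp: fa_smult_def)
  ultimately show ?thesis
    by (auto simp: FA_def fa_smult_def intro: finite_subset)
qed

lemma FA_mult: "f \<in> FA \<Longrightarrow> g \<in> FA \<Longrightarrow> fa_mult f g \<in> FA"
proof -
  assume "f \<in> FA" "g \<in> FA"
  then have "finite (fa_supp (fa_mult f g))"
    by (meson finite_imageI finite_cartesian_product finite_fa_supp fa_supp_fa_mult finite_subset)
  moreover have "fa_mult f g [] = 0"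
    using FA_Nil[OF \<open>f \<in> FA\<close>] by (simp add: fa_mult_def)
  ultimately show ?thesis
    by (simp add: FA_def fa_supp_def)
qed

lemma FA_var: "fa_var i \<in> FA"
proof -
  have "{w. fa_var i w \<noteq> (0::'k::field)} = {[i]}"
    by (auto simp: fa_var_def)
  then show ?thesis
    by (simp add: FA_def fa_var_def)
qed

lemma FA_zero: "(\<lambda>_. 0) \<in> FA"
  by (simp add: FA_def)

lemma FA_comm: "f \<in> FA \<Longrightarrow> g \<in> FA \<Longrightarrow> fa_comm f g \<in> FA"
  by (simp add: fa_comm_def FA_add FA_smult FA_mult)

lemma FA_pow: "f \<in> FA \<Longrightarrow> fa_pow f n \<in> FA"
  by (induction f n rule: fa_pow.induct) (auto simp: FA_zero FA_mult)

lemma FA_kappa: "f \<in> FA \<Longrightarrow> g \<in> FA \<Longrightarrow> kappa p f g \<in> FA"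
  by (simp add: kappa_def FA_mult FA_comm FA_pow)

lemma FA_w_elt: "w_elt p m \<in> FA"
  by (induction p m rule: w_elt.induct) (auto simp: FA_zero FA_mult FA_kappa FA_var)

lemma sum_splittings:
  fixes F :: "nat list \<Rightarrow> nat list \<Rightarrow> 'a::comm_monoid_add"
  assumes U: "finite U" and V: "finite V" and vanish: "\<And>u v. u \<notin> U \<or> v \<notin> V \<Longrightarrow> F u v = 0"
  shows "(\<Sum>w\<in>(\<lambda>(u, v). u @ v) ` (U \<times> V). \<Sum>n\<le>length w. F (take n w) (drop n w)) =
    (\<Sum>u\<in>U. \<Sum>v\<in>V. F u v)"
proof -
  let ?S = "(\<lambda>(u, v). u @ v) ` (U \<times> V)" and ?split = "\<lambda>(u, v). (u @ v, length u)"
  have fS: "finite ?S"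
    using U V by simp
  have "(\<Sum>w\<in>?S. \<Sum>n\<le>length w. F (take n w) (drop n w)) =
      (\<Sum>(w, n)\<in>Sigma ?S (\<lambda>w. {..length w}). F (take n w) (drop n w))"
    using fS by (simp add: sum.Sigma)
  also have "\<dots> = (\<Sum>(w, n)\<in>?split ` (U \<times> V). F (take n w) (drop n w))"
  proof (rule sum.mono_neutral_right)
    show "\<forall>i\<in>Sigma ?S (\<lambda>w. {..length w}) - ?split ` (U \<times> V).
        (case i of (w, n) \<Rightarrow> F (take n w) (drop n w)) = 0"
    proof
      fix i
      assume "i \<in> Sigma ?S (\<lambda>w. {..length w}) - ?split ` (U \<times> V)"
      then obtain w n where i: "i = (w, n)" "n \<le> length w" "(w, n) \<notin> ?split ` (U \<times> V)"
        by (cases i) (simp only: mem_Sigma_iff Diff_iff atMost_iff, blast)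
      then have "(w, n) = ?split (take n w, drop n w)"
        by (simp add: min_def)
      with i(3) have "\<not> (take n w \<in> U \<and> drop n w \<in> V)"
        by blast
      with i(1) show "(case i of (w, n) \<Rightarrow> F (take n w) (drop n w)) = 0"
        using vanish by auto
    qed
  qed (use fS in auto)
  also have "\<dots> = (\<Sum>(u, v)\<in>U \<times> V. F u v)"
    by (subst sum.reindex) (auto simp: inj_on_def intro!: sum.cong)
  finally show ?thesis
    using U V by (simp add: sum.cartesian_product)
qed

lemma sum_fa_supp_fa_mult:
  assumes f: "f \<in> FA" and h: "h \<in> FA"
  shows "(\<Sum>w\<in>fa_supp (fa_mult f h). fa_mult f h w * \<phi> w) =
    (\<Sum>u\<in>fa_supp f. \<Sum>v\<in>fa_supp h. f u * h v * \<phi> (u @ v))"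
proof -
  let ?S = "(\<lambda>(u, v). u @ v) ` (fa_supp f \<times> fa_supp h)"
  have fin: "finite (fa_supp f)" "finite (fa_supp h)"
    using finite_fa_supp f h by auto
  have "(\<Sum>w\<in>fa_supp (fa_mult f h). fa_mult f h w * \<phi> w) = (\<Sum>w\<in>?S. fa_mult f h w * \<phi> w)"
    using fin by (intro sum_fa_supp_superset fa_supp_fa_mult) simp
  also have "\<dots> = (\<Sum>w\<in>?S. \<Sum>n\<le>length w. f (take n w) * h (drop n w) * \<phi> (take n w @ drop n w))"
    by (simp add: fa_mult_def sum_distrib_right)
  also have "\<dots> = (\<Sum>u\<in>fa_supp f. \<Sum>v\<in>fa_supp h. f u * h v * \<phi> (u @ v))"
    using fin by (intro sum_splittings) (auto simp: fa_supp_def)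
  finally show ?thesis .
qed

definition multideg :: "'k::field fa \<Rightarrow> (nat \<Rightarrow> nat) \<Rightarrow> bool" where
  "multideg f d \<longleftrightarrow> (\<forall>w. f w \<noteq> 0 \<longrightarrow> (\<forall>t. count_list w t = d t))"

lemma multideg_var: "multideg (fa_var i) (\<lambda>t. if t = i then 1 else 0)"
  and multideg_zero: "multideg (\<lambda>_. 0) d"
  and multideg_smult: "multideg f d \<Longrightarrow> multideg (fa_smult c f) d"
  by (auto simp: multideg_def fa_var_def fa_smult_def)

lemma multideg_add: "multideg f d \<Longrightarrow> multideg g d \<Longrightarrow> multideg (fa_add f g) d"
  unfolding multideg_def fa_add_def by (metis add.left_neutral add.right_neutral)

lemma multideg_mult:
  assumes "multideg f d" "multideg g e"
  shows "multideg (fa_mult f g) (\<lambda>t. d t + e t)"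
  unfolding multideg_def
proof (intro allI impI)
  fix w t
  assume "fa_mult f g w \<noteq> 0"
  then obtain n where "f (take n w) \<noteq> 0" "g (drop n w) \<noteq> 0"
    by (rule fa_mult_nonzero)
  then have "count_list (take n w) t = d t" "count_list (drop n w) t = e t"
    using assms by (auto simp: multideg_def)
  moreover have "count_list w t = count_list (take n w) t + count_list (drop n w) t"
    by (metis append_take_drop_id count_list_append)
  ultimately show "count_list w t = d t + e t"
    by simp
qed

lemma multideg_pow: "multideg f d \<Longrightarrow> multideg (fa_pow f n) (\<lambda>t. n * d t)"
proof (induction f n rule: fa_pow.induct)
  case (3 f n)
  then have "multideg (fa_mult f (fa_pow f (Suc n))) (\<lambda>t. d t + Suc n * d t)"
    by (intro multideg_mult) auto
  then show ?case
    by simp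
qed (simp_all add: multideg_zero)

lemma multideg_kappa:
  assumes "multideg f d" "multideg g e" "1 \<le> p"
  shows "multideg (kappa p f g) (\<lambda>t. p * (d t + e t))"
proof -
  have "multideg (fa_mult g f) (\<lambda>t. d t + e t)"
    using multideg_mult[OF assms(2,1)] by (simp add: add.commute)
  then have "multideg (fa_comm f g) (\<lambda>t. d t + e t)"
    unfolding fa_comm_def by (rule multideg_add[OF multideg_mult[OF assms(1,2)] multideg_smult])
  then have "multideg (kappa p f g) (\<lambda>t. (d t + e t) + (p - 1) * d t + (p - 1) * e t)"
    unfolding kappa_def by (intro multideg_mult multideg_pow assms)
  moreover have "(d t + e t) + (p - 1) * d t + (p - 1) * e t = p * (d t + e t)" for t
    using assms(3) by (cases p) (simp_all add: algebra_simps)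
  ultimately show ?thesis
    by simp
qed

lemma multideg_w_elt:
  assumes "1 \<le> p" "1 \<le> k"
  shows "multideg (w_elt p k :: 'k::field fa) (\<lambda>t. if t \<in> {1..2*k} then p else 0)"
  using assms(2)
proof (induction k rule: nat_induct_at_least)
  case base
  have "multideg (w_elt p 1 :: 'k fa) (\<lambda>t. p * ((if t = 1 then 1 else 0) + (if t = 2 then 1 else 0)))"
    using multideg_kappa[OF multideg_var multideg_var assms(1), of 1 2] by simp
  then show ?case
    by (rule back_subst[where P="multideg _"]) auto
next
  case (Suc k)
  have step: "w_elt p (Suc k) = fa_mult (w_elt p k) (kappa p (fa_var (2 * Suc k - 1)) (fa_var (2 * Suc k)))"
    using Suc.hyps by (cases k) auto
  have "multideg (w_elt p (Suc k) :: 'k fa) (\<lambda>t. (if t \<in> {1..2*k} then p else 0) +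
      p * ((if t = 2 * Suc k - 1 then 1 else 0) + (if t = 2 * Suc k then 1 else 0)))"
    unfolding step by (intro multideg_mult Suc.IH multideg_kappa multideg_var assms(1))
  then show ?case
    by (rule back_subst[where P="multideg _"]) (auto simp: fun_eq_iff)
qed

lemma fa_endo_comm:
  "fa_endo \<phi> \<Longrightarrow> f \<in> FA \<Longrightarrow> g \<in> FA \<Longrightarrow> \<phi> (fa_comm f g) = fa_comm (\<phi> f) (\<phi> g)"
  unfolding fa_comm_def fa_endo_def by (simp add: FA_mult FA_smult)

lemma fa_endo_zero: "fa_endo \<phi> \<Longrightarrow> \<phi> (\<lambda>_. 0) = (\<lambda>_. (0::'k::field))"
proof -
  assume "fa_endo \<phi>"
  then have "\<phi> (fa_smult 0 (\<lambda>_. 0)) = fa_smult 0 (\<phi> (\<lambda>_. (0::'k)))"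
    using FA_zero unfolding fa_endo_def by blast
  then show ?thesis
    by (simp add: fa_smult_def)
qed

definition endo_kernel :: "('k::field fa \<Rightarrow> 'k) \<Rightarrow> 'k fa set" where
  "endo_kernel L = {f \<in> FA. \<forall>\<phi>. fa_endo \<phi> \<longrightarrow> L (\<phi> f) = 0}"

lemma endo_kernel_zero: "f \<in> endo_kernel L \<Longrightarrow> L f = 0"
proof -
  have "fa_endo id"
    by (simp add: fa_endo_def)
  then show "f \<in> endo_kernel L \<Longrightarrow> L f = 0"
    unfolding endo_kernel_def by (metis (mono_tags, lifting) id_apply mem_Collect_eq)
qed

lemma fa_subspace_endo_kernel:
  fixes L :: "'k::field fa \<Rightarrow> 'k"
  assumes add: "\<And>f g. f \<in> FA \<Longrightarrow> g \<in> FA \<Longrightarrow> L (fa_add f g) = L f + L g"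
    and smult: "\<And>c f. f \<in> FA \<Longrightarrow> L (fa_smult c f) = c * L f"
  shows "fa_subspace (endo_kernel L)"
proof -
  have "L (\<lambda>_. 0) = 0"
    using smult[OF FA_zero, of 0] by (simp add: fa_smult_def)
  then show ?thesis
    unfolding fa_subspace_def endo_kernel_def fa_endo_def
    by (auto simp: FA_add FA_smult FA_zero add smult fa_endo_zero[unfolded fa_endo_def])
qed

lemma endo_kernel_invariant:
  assumes "fa_endo \<phi>"
  shows "\<phi> ` endo_kernel L \<subseteq> endo_kernel L"
proof
  fix x
  assume "x \<in> \<phi> ` endo_kernel L"
  then obtain f where f: "f \<in> endo_kernel L" "x = \<phi> f"
    by blast
  then have "x \<in> FA"
    using assms by (auto simp: endo_kernel_def fa_endo_def)
  moreover have "L (\<psi> x) = 0" if "fa_endo \<psi>" for \<psi>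
  proof -
    have "fa_endo (\<psi> \<circ> \<phi>)"
      using that assms by (simp add: fa_endo_def)
    then show ?thesis
      using f by (auto simp: endo_kernel_def)
  qed
  ultimately show "x \<in> endo_kernel L"
    by (simp add: endo_kernel_def)
qed

lemma S2_subset_endo_kernel:
  fixes L :: "'k::field fa \<Rightarrow> 'k"
  assumes "\<And>f g. f \<in> FA \<Longrightarrow> g \<in> FA \<Longrightarrow> L (fa_add f g) = L f + L g"
    and "\<And>c f. f \<in> FA \<Longrightarrow> L (fa_smult c f) = c * L f"
    and "fa_comm (fa_var 1) (fa_var 2) \<in> endo_kernel L"
  shows "S2 \<subseteq> endo_kernel L"
  unfolding S2_def using fa_subspace_endo_kernel[OF assms(1,2)] assms(3) endo_kernel_invariant
  by blast

definition inversions :: "nat set \<Rightarrow> nat set \<Rightarrow> (nat \<times> nat) set" where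
  "inversions A B = {(i, j). i \<in> A \<and> j \<in> B \<and> j < i}"

lemma gr_sign_eq: "gr_sign A B = (-1) ^ card (inversions A B)"
  by (simp add: gr_sign_def inversions_def)

lemma finite_inversions: "finite A \<Longrightarrow> finite B \<Longrightarrow> finite (inversions A B)"
  by (rule finite_subset[of _ "A \<times> B"]) (auto simp: inversions_def)

lemma gr_sign_ordered:
  assumes "\<forall>x\<in>A. \<forall>y\<in>B. x < y"
  shows "gr_sign A B = 1"
proof -
  have "inversions A B = {}"
    using assms by (fastforce simp: inversions_def)
  then show ?thesis
    by (simp add: gr_sign_eq)
qed

lemma gr_sign_empty_left [simp]: "gr_sign {} B = 1"
  and gr_sign_empty_right [simp]: "gr_sign A {} = 1"
  by (simp_all add: gr_sign_def)

lemma gr_sign_Un_left: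
  assumes "finite A" "finite B" "finite C" "A \<inter> B = {}"
  shows "gr_sign (A \<union> B) C = (gr_sign A C * gr_sign B C :: 'k::field)"
proof -
  have "inversions (A \<union> B) C = inversions A C \<union> inversions B C"
    and "inversions A C \<inter> inversions B C = {}"
    using assms(4) by (auto simp: inversions_def)
  then show ?thesis
    using assms by (simp add: gr_sign_eq card_Un_disjoint finite_inversions power_add)
qed

lemma gr_sign_Un_right:
  assumes "finite A" "finite B" "finite C" "B \<inter> C = {}"
  shows "gr_sign A (B \<union> C) = (gr_sign A B * gr_sign A C :: 'k::field)"
proof -
  have "inversions A (B \<union> C) = inversions A B \<union> inversions A C"
    and "inversions A B \<inter> inversions A C = {}"
    using assms(4) by (auto simp: inversions_def)
  then show ?thesis
    using assms by (simp add: gr_sign_eq card_Un_disjoint finite_inversions power_add)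
qed

lemma gr_sign_swap:
  assumes "finite A" "finite B" "A \<inter> B = {}"
  shows "gr_sign B A = (-1) ^ (card A * card B) * (gr_sign A B :: 'k::field)"
proof -
  have "A \<times> B = inversions A B \<union> prod.swap ` inversions B A"
    and "inversions A B \<inter> prod.swap ` inversions B A = {}"
    using assms(3) by (auto simp: inversions_def image_iff)
  then have "card A * card B = card (inversions A B) + card (inversions B A)"
    using assms by (simp add: card_Un_disjoint finite_inversions card_image
        flip: card_cartesian_product)
  then show ?thesis
    by (simp add: gr_sign_eq power_add)
qed

lemma gr_sign_consecutive:
  assumes "finite X" "a \<notin> X" "Suc a \<notin> X"
  shows "gr_sign {a, Suc a} X = (1::'k::field)"
proof -
  have "inversions {Suc a} X = map_prod Suc id ` inversions {a} X"
    using assms by (auto simp: inversions_def image_iff less_Suc_eq)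
  moreover have "inj (map_prod Suc (id :: nat \<Rightarrow> nat))"
    by (auto simp: inj_def)
  ultimately have "card (inversions {Suc a} X) = card (inversions {a} X)"
    by (simp add: card_image inj_on_subset)
  moreover have "gr_sign ({a} \<union> {Suc a}) X = (gr_sign {a} X * gr_sign {Suc a} X :: 'k)"
    using assms by (intro gr_sign_Un_left) auto
  ultimately show ?thesis
    by (simp add: gr_sign_eq insert_commute flip: power_add)
qed

section \<open>The unitary Grassmann algebra\<close>

lemma sum_fun_apply: "(\<Sum>i\<in>I. f i) x = (\<Sum>i\<in>I. (f i x :: 'a::comm_monoid_add))"
  by (induction I rule: infinite_finite_induct) auto

text \<open>Unlike \<open>gr_mult\<close>, the product \<open>gmul\<close> also uses the coefficient of the empty monomial, so
  it is the multiplication of the unitary Grassmann algebra with unit \<open>gone\<close>. It vanishes on infinite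
  sets, hence \<open>gone\<close> is a unit only for \<open>finitary\<close> elements.\<close>

definition gmul :: "'k::field gr \<Rightarrow> 'k gr \<Rightarrow> 'k gr" where
  "gmul a b = (\<lambda>C. \<Sum>A\<in>Pow C. gr_sign A (C - A) * a A * b (C - A))"

definition gmono :: "nat set \<Rightarrow> 'k::field gr" where
  "gmono A = (\<lambda>X. if X = A then 1 else 0)"

abbreviation gone :: "'k::field gr" where
  "gone \<equiv> gmono {}"

definition finitary :: "'k::field gr \<Rightarrow> bool" where
  "finitary a \<longleftrightarrow> (\<forall>C. infinite C \<longrightarrow> a C = 0)"

lemma gmul_infinite: "infinite C \<Longrightarrow> gmul a b C = 0"
  by (simp add: gmul_def)

lemma gmul_nonzero:
  assumes "gmul a b C \<noteq> 0"
  obtains A where "finite C" "A \<subseteq> C" "a A \<noteq> 0" "b (C - A) \<noteq> 0"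
proof -
  obtain A where "A \<in> Pow C" "gr_sign A (C - A) * a A * b (C - A) \<noteq> 0"
    using assms unfolding gmul_def by (meson sum.neutral)
  with assms gmul_infinite that show ?thesis by auto
qed

lemma gmul_gmul_left:
  assumes fin: "finite C"
  shows "gmul (gmul a b) c C = (\<Sum>B\<in>Pow C. \<Sum>D\<in>Pow (C - B). gr_sign B D *
    gr_sign B (C - (B \<union> D)) * gr_sign D (C - (B \<union> D)) * a B * b D * c (C - (B \<union> D)))"
    (is "_ = (\<Sum>B\<in>Pow C. \<Sum>D\<in>Pow (C - B). ?F B D)")
proof -
  have summand: "gr_sign A (C - A) * (gr_sign B (A - B) * a B * b (A - B)) * c (C - A) = ?F B (A - B)"
    if "A \<subseteq> C" "B \<subseteq> A" for A B
  proof -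
    have "finite A" "finite B"
      using that fin by (auto intro: finite_subset)
    then have sign: "gr_sign A (C - A) = gr_sign B (C - A) * gr_sign (A - B) (C - A)"
      using gr_sign_Un_left[of B "A - B" "C - A"] fin \<open>B \<subseteq> A\<close> by (simp add: Un_absorb1)
    have "C - (B \<union> (A - B)) = C - A"
      using \<open>B \<subseteq> A\<close> by auto
    then show ?thesis
      unfolding sign by (simp only: ac_simps)
  qed
  have "gmul (gmul a b) c C =
      (\<Sum>A\<in>Pow C. \<Sum>B\<in>Pow A. gr_sign A (C - A) * (gr_sign B (A - B) * a B * b (A - B)) * c (C - A))"
    by (simp add: gmul_def sum_distrib_left sum_distrib_right)
  also have "\<dots> = (\<Sum>A\<in>Pow C. \<Sum>B\<in>Pow A. ?F B (A - B))"
    by (intro sum.cong refl summand) auto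
  also have "\<dots> = (\<Sum>(A, B)\<in>Sigma (Pow C) Pow. ?F B (A - B))"
    using fin by (subst sum.Sigma) (auto intro: finite_subset)
  also have "\<dots> = (\<Sum>(B, D)\<in>Sigma (Pow C) (\<lambda>B. Pow (C - B)). ?F B D)"
    by (rule sum.reindex_bij_witness[where i="\<lambda>(B, D). (B \<union> D, B)" and j="\<lambda>(A, B). (B, A - B)"])
      auto
  also have "\<dots> = (\<Sum>B\<in>Pow C. \<Sum>D\<in>Pow (C - B). ?F B D)"
    using fin by (subst sum.Sigma) (auto intro: finite_subset)
  finally show ?thesis .
qed

lemma gmul_gmul_right:
  assumes fin: "finite C"
  shows "gmul a (gmul b c) C = (\<Sum>B\<in>Pow C. \<Sum>D\<in>Pow (C - B). gr_sign B D *
    gr_sign B (C - (B \<union> D)) * gr_sign D (C - (B \<union> D)) * a B * b D * c (C - (B \<union> D)))"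
    (is "_ = ?R")
proof -
  have summand: "gr_sign B (C - B) * a B * (gr_sign D (C - B - D) * b D * c (C - B - D)) =
      gr_sign B D * gr_sign B (C - (B \<union> D)) * gr_sign D (C - (B \<union> D)) * a B * b D * c (C - (B \<union> D))"
    if "B \<subseteq> C" "D \<subseteq> C - B" for B D
  proof -
    have "D \<union> (C - (B \<union> D)) = C - B" "C - B - D = C - (B \<union> D)"
      and "finite B" "finite D" "finite (C - (B \<union> D))"
      using that fin by (auto intro: finite_subset)
    then have sign: "gr_sign B (C - B) = gr_sign B D * gr_sign B (C - (B \<union> D))"
      using gr_sign_Un_right[of B D "C - (B \<union> D)"] by auto
    show ?thesis
      unfolding sign \<open>C - B - D = C - (B \<union> D)\<close> by (simp only: ac_simps)
  qed
  have "gmul a (gmul b c) C = (\<Sum>B\<in>Pow C. \<Sum>D\<in>Pow (C - B).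
      gr_sign B (C - B) * a B * (gr_sign D (C - B - D) * b D * c (C - B - D)))"
    by (simp add: gmul_def sum_distrib_left)
  also have "\<dots> = ?R"
    by (intro sum.cong refl summand) auto
  finally show ?thesis .
qed

lemma gmul_assoc: "gmul (gmul a b) c = gmul a (gmul b c)"
proof
  fix C
  show "gmul (gmul a b) c C = gmul a (gmul b c) C"
    by (cases "finite C") (simp_all add: gmul_gmul_left gmul_gmul_right gmul_infinite)
qed

lemma gmul_add_left: "gmul (a + b) c = gmul a c + gmul b c"
  and gmul_add_right: "gmul a (b + c) = gmul a b + gmul a c"
  and gmul_smult_left: "gmul (gr_smult k a) c = gr_smult k (gmul a c)"
  and gmul_smult_right: "gmul a (gr_smult k c) = gr_smult k (gmul a c)"
  and gmul_uminus_left: "gmul (- a) c = - gmul a c"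
  and gmul_uminus_right: "gmul a (- c) = - gmul a c"
  and gmul_zero_left [simp]: "gmul 0 c = 0"
  and gmul_zero_right [simp]: "gmul a 0 = 0"
  by (auto simp: gmul_def gr_smult_def algebra_simps sum.distrib sum_distrib_left sum_negf)

lemma gr_smult_add: "gr_smult c (a + b) = gr_smult c a + gr_smult c b"
  by (rule ext) (simp add: gr_smult_def algebra_simps)

lemma gr_smult_zero [simp]: "gr_smult c 0 = 0"
  by (rule ext) (simp add: gr_smult_def)

lemma gmul_sum_left: "gmul (\<Sum>i\<in>I. f i) c = (\<Sum>i\<in>I. gmul (f i) c)"
  by (induction I rule: infinite_finite_induct) (simp_all only: sum.insert sum.infinite
      sum.empty gmul_add_left gmul_zero_left not_False_eq_True)

lemma gmul_sum_right: "gmul c (\<Sum>i\<in>I. f i) = (\<Sum>i\<in>I. gmul c (f i))"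
  by (induction I rule: infinite_finite_induct) (simp_all only: sum.insert sum.infinite
      sum.empty gmul_add_right gmul_zero_right not_False_eq_True)

lemma gmul_gmono_left:
  assumes "finite C"
  shows "gmul (gmono A) b C = (if A \<subseteq> C then gr_sign A (C - A) * b (C - A) else 0)"
proof -
  have "gmul (gmono A) b C = (\<Sum>X\<in>Pow C. if X = A then gr_sign A (C - A) * b (C - A) else 0)"
    unfolding gmul_def gmono_def by (intro sum.cong) auto
  then show ?thesis
    using assms by (simp add: sum.delta)
qed

lemma gmul_gmono_right:
  assumes "finite C"
  shows "gmul a (gmono B) C = (if B \<subseteq> C then gr_sign (C - B) B * a (C - B) else 0)"
proof -
  have "gmul a (gmono B) C =
      (\<Sum>X\<in>Pow C. if X = C - B then (if B \<subseteq> C then gr_sign (C - B) B * a (C - B) else 0) else 0)"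
    unfolding gmul_def gmono_def by (intro sum.cong) (auto simp: Diff_Diff_Int Int_absorb1)
  then show ?thesis
    using assms by (simp add: sum.delta)
qed

lemma gmul_gone_left: "finitary a \<Longrightarrow> gmul gone a = a"
  and gmul_gone_right: "finitary a \<Longrightarrow> gmul a gone = a"
  by (rule ext, case_tac "finite x", auto simp: gmul_gmono_left gmul_gmono_right finitary_def
      gmul_infinite)+

lemma gmul_gmono_gmono:
  assumes "finite A" "finite B" "\<forall>x\<in>A. \<forall>y\<in>B. x < y"
  shows "gmul (gmono A) (gmono B) = (gmono (A \<union> B) :: 'k::field gr)"
proof
  fix C
  have "A \<inter> B = {}"
    using assms(3) by auto
  then have iff: "(A \<subseteq> C \<and> C - A = B) \<longleftrightarrow> C = A \<union> B"
    by auto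
  show "gmul (gmono A) (gmono B) C = (gmono (A \<union> B) C :: 'k)"
  proof (cases "finite C")
    case True
    then have "gmul (gmono A) (gmono B) C = (if A \<subseteq> C \<and> C - A = B then gr_sign A B else 0)"
      by (subst gmul_gmono_left[OF True]) (auto simp: gmono_def)
    then show ?thesis
      unfolding iff gr_sign_ordered[OF assms(3)] by (simp add: gmono_def[of "A \<union> B"])
  qed (use assms in \<open>auto simp: gmul_infinite gmono_def\<close>)
qed

lemma gr_mult_eq_gmul:
  assumes "a {} = 0" "b {} = 0"
  shows "gr_mult a b = gmul a b"
proof
  fix C
  show "gr_mult a b C = gmul a b C"
  proof (cases "finite C")
    case True
    have "gmul a b C = (\<Sum>A\<in>{A. A \<subseteq> C \<and> A \<noteq> {} \<and> A \<noteq> C}. gr_sign A (C - A) * a A * b (C - A))"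
      unfolding gmul_def by (rule sum.mono_neutral_right) (use True assms in auto)
    then show ?thesis
      using True by (simp add: gr_mult_def)
  qed (simp add: gr_mult_def gmul_infinite)
qed

lemma finitary_gmul [simp]: "finitary (gmul a b)"
  and finitary_gmono [simp]: "finite A \<Longrightarrow> finitary (gmono A)"
  and finitary_add [simp]: "finitary a \<Longrightarrow> finitary b \<Longrightarrow> finitary (a + b)"
  by (auto simp: finitary_def gmul_infinite gmono_def gr_smult_def)

lemma gmul_swap:
  assumes "finite C"
  shows "gmul b a C =
    (\<Sum>A\<in>Pow C. (-1) ^ (card A * card (C - A)) * gr_sign A (C - A) * a A * b (C - A))"
proof -
  have "gmul b a C = (\<Sum>A\<in>Pow C. gr_sign (C - A) (C - (C - A)) * b (C - A) * a (C - (C - A)))"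
    unfolding gmul_def
    by (rule sum.reindex_bij_witness[where i="\<lambda>A. C - A" and j="\<lambda>A. C - A"]) (auto simp: double_diff)
  also have "\<dots> = (\<Sum>A\<in>Pow C. (-1) ^ (card A * card (C - A)) * gr_sign A (C - A) * a A * b (C - A))"
  proof (intro sum.cong refl)
    fix A assume A: "A \<in> Pow C"
    then have "gr_sign (C - A) A = (-1) ^ (card A * card (C - A)) * (gr_sign A (C - A) :: 'a)"
      using gr_sign_swap[of A "C - A"] assms by (auto intro: finite_subset)
    moreover have "C - (C - A) = A"
      using A by auto
    ultimately show "gr_sign (C - A) (C - (C - A)) * b (C - A) * a (C - (C - A)) =
      (-1) ^ (card A * card (C - A)) * gr_sign A (C - A) * a A * b (C - A)"
      by (simp add: ac_simps)
  qed
  finally show ?thesis .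
qed

definition even_supp :: "'k::field gr \<Rightarrow> bool" where
  "even_supp a \<longleftrightarrow> (\<forall>A. a A \<noteq> 0 \<longrightarrow> even (card A))"

definition odd_supp :: "'k::field gr \<Rightarrow> bool" where
  "odd_supp a \<longleftrightarrow> (\<forall>A. a A \<noteq> 0 \<longrightarrow> odd (card A))"

definition even_part :: "'k::field gr \<Rightarrow> 'k gr" where
  "even_part a = (\<lambda>A. if even (card A) then a A else 0)"

definition odd_part :: "'k::field gr \<Rightarrow> 'k gr" where
  "odd_part a = (\<lambda>A. if odd (card A) then a A else 0)"

lemma even_part_plus_odd_part: "even_part a + odd_part a = a"
  by (rule ext) (simp add: even_part_def odd_part_def)

lemma even_supp_even_part [simp]: "even_supp (even_part a)"
  and odd_supp_odd_part [simp]: "odd_supp (odd_part a)"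
  by (simp_all add: even_supp_def even_part_def odd_supp_def odd_part_def)

lemma even_part_add: "even_part (a + b) = even_part a + even_part b"
  and odd_part_add: "odd_part (a + b) = odd_part a + odd_part b"
  by (rule ext, simp add: even_part_def odd_part_def)+

lemma even_part_id: "even_supp a \<Longrightarrow> even_part a = a"
  and odd_part_even: "even_supp a \<Longrightarrow> odd_part a = 0"
  and odd_part_id: "odd_supp a \<Longrightarrow> odd_part a = a"
  and even_part_odd: "odd_supp a \<Longrightarrow> even_part a = 0"
  by (rule ext, auto simp: even_supp_def odd_supp_def even_part_def odd_part_def)+

lemma gmul_commute_even:
  assumes "even_supp a"
  shows "gmul b a = gmul a b"
proof
  fix C
  show "gmul b a C = gmul a b C"
  proof (cases "finite C")
    case True
    have eq: "(-1) ^ (card A * card (C - A)) * gr_sign A (C - A) * a A * b (C - A) =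
        gr_sign A (C - A) * a A * b (C - A)" for A
    proof (cases "a A = 0")
      case False
      then have "even (card A * card (C - A))"
        using assms by (simp add: even_supp_def)
      then show ?thesis by simp
    qed simp
    show ?thesis
      unfolding gmul_swap[OF True, where a=a and b=b] unfolding gmul_def by (rule sum.cong[OF refl eq])
  qed (simp add: gmul_infinite)
qed

lemma gmul_anticommute_odd:
  assumes "odd_supp a" "odd_supp b"
  shows "gmul b a = - gmul a b"
proof
  fix C
  show "gmul b a C = (- gmul a b) C"
  proof (cases "finite C")
    case True
    have eq: "(-1) ^ (card A * card (C - A)) * gr_sign A (C - A) * a A * b (C - A) =
        - (gr_sign A (C - A) * a A * b (C - A))" for A
    proof (cases "a A = 0 \<or> b (C - A) = 0")
      case False
      then have "odd (card A * card (C - A))"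
        using assms by (simp add: odd_supp_def)
      then show ?thesis by simp
    qed auto
    show ?thesis
      unfolding gmul_swap[OF True, where a=a and b=b] uminus_apply
      unfolding gmul_def sum_negf[symmetric]
      by (rule sum.cong[OF refl eq])
  qed (simp add: gmul_infinite)
qed

lemma gmul_odd_self:
  assumes "odd_supp a" and "(2::'k::field) \<noteq> 0"
  shows "gmul a a = (0 :: 'k gr)"
proof
  fix C
  have "gmul a a C = - gmul a a C"
    using fun_cong[OF gmul_anticommute_odd[OF assms(1) assms(1)], of C] by (simp only: uminus_apply)
  then have "2 * gmul a a C = 0"
    unfolding mult_2 using eq_neg_iff_add_eq_0 by blast
  then show "gmul a a C = 0 C"
    using assms(2) by simp
qed

lemma gmul_parity:
  assumes "\<And>A B. a A \<noteq> 0 \<Longrightarrow> b B \<noteq> 0 \<Longrightarrow> finite A \<Longrightarrow> finite B \<Longrightarrow> P (card A + card B)"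
  shows "\<forall>C. gmul a b C \<noteq> 0 \<longrightarrow> P (card C)"
proof (intro allI impI)
  fix C
  assume "gmul a b C \<noteq> 0"
  then obtain A where "finite C" "A \<subseteq> C" "a A \<noteq> 0" "b (C - A) \<noteq> 0"
    by (rule gmul_nonzero)
  then show "P (card C)"
    using assms[of A "C - A"] card_Diff_subset[of A C] card_mono[of C A]
    by (auto intro: finite_subset)
qed

lemma even_supp_gmul_odd: "odd_supp a \<Longrightarrow> odd_supp b \<Longrightarrow> even_supp (gmul a b)"
  unfolding even_supp_def odd_supp_def by (rule gmul_parity) auto

lemma odd_supp_gmul_left: "odd_supp a \<Longrightarrow> even_supp b \<Longrightarrow> odd_supp (gmul a b)"
  unfolding even_supp_def odd_supp_def by (rule gmul_parity) auto

lemma gmul_odd_split: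
  "odd_supp a \<Longrightarrow> gmul a b = gmul a (even_part b) + gmul a (odd_part b)"
  by (metis even_part_plus_odd_part gmul_add_right)

lemma even_part_gmul_odd: "odd_supp a \<Longrightarrow> even_part (gmul a b) = gmul a (odd_part b)"
  by (subst gmul_odd_split)
    (simp_all add: even_part_add even_part_odd[OF odd_supp_gmul_left]
      even_part_id[OF even_supp_gmul_odd])

lemma odd_part_gmul_odd: "odd_supp a \<Longrightarrow> odd_part (gmul a b) = gmul a (even_part b)"
  by (subst gmul_odd_split)
    (simp_all add: odd_part_add odd_part_id[OF odd_supp_gmul_left]
      odd_part_even[OF even_supp_gmul_odd])

section \<open>Evaluating noncommutative polynomials in the Grassmann algebra\<close>

definition wprod :: "(nat \<Rightarrow> 'k::field gr) \<Rightarrow> nat list \<Rightarrow> 'k gr" where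
  "wprod g w = foldr (\<lambda>t. gmul (g t)) w gone"

lemma wprod_Nil [simp]: "wprod g [] = gone"
  and wprod_Cons [simp]: "wprod g (t # w) = gmul (g t) (wprod g w)"
  by (simp_all add: wprod_def)

lemma finitary_wprod [simp]: "finitary (wprod g w)"
  by (cases w) auto

lemma wprod_append: "wprod g (u @ v) = gmul (wprod g u) (wprod g v)"
  by (induction u) (auto simp: gmul_gone_left gmul_assoc)

definition gr_eval :: "(nat \<Rightarrow> 'k::field gr) \<Rightarrow> 'k fa \<Rightarrow> 'k gr" where
  "gr_eval g f = (\<lambda>C. \<Sum>w\<in>fa_supp f. f w * wprod g w C)"

lemma gr_eval_superset:
  assumes "finite S" "fa_supp f \<subseteq> S"
  shows "gr_eval g f C = (\<Sum>w\<in>S. f w * wprod g w C)"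
  unfolding gr_eval_def using assms by (rule sum_fa_supp_superset)

lemma gr_eval_add:
  assumes "f \<in> FA" "h \<in> FA"
  shows "gr_eval g (fa_add f h) = gr_eval g f + gr_eval g h"
proof
  fix C
  let ?S = "fa_supp f \<union> fa_supp h"
  have fin: "finite ?S"
    using finite_fa_supp assms by auto
  have "fa_supp (fa_add f h) \<subseteq> ?S"
    by (auto simp: fa_supp_def fa_add_def)
  then have "gr_eval g (fa_add f h) C = (\<Sum>w\<in>?S. fa_add f h w * wprod g w C)"
    by (rule gr_eval_superset[OF fin])
  also have "\<dots> = (gr_eval g f + gr_eval g h) C"
    unfolding plus_fun_apply gr_eval_superset[OF fin Un_upper1] gr_eval_superset[OF fin Un_upper2]
    by (simp add: fa_add_def algebra_simps sum.distrib)
  finally show "gr_eval g (fa_add f h) C = (gr_eval g f + gr_eval g h) C" .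
qed

lemma gr_eval_smult:
  assumes "f \<in> FA"
  shows "gr_eval g (fa_smult c f) = gr_smult c (gr_eval g f)"
proof
  fix C
  have "fa_supp (fa_smult c f) \<subseteq> fa_supp f"
    by (auto simp: fa_supp_def fa_smult_def)
  then have "gr_eval g (fa_smult c f) C = (\<Sum>w\<in>fa_supp f. fa_smult c f w * wprod g w C)"
    by (rule gr_eval_superset[OF finite_fa_supp[OF assms]])
  then show "gr_eval g (fa_smult c f) C = gr_smult c (gr_eval g f) C"
    by (simp add: gr_eval_def fa_smult_def gr_smult_def sum_distrib_left algebra_simps)
qed

lemma gr_eval_mult:
  assumes "f \<in> FA" "h \<in> FA"
  shows "gr_eval g (fa_mult f h) = gmul (gr_eval g f) (gr_eval g h)"
proof
  fix C
  have eval_sum: "gr_eval g f = (\<Sum>u\<in>fa_supp f. gr_smult (f u) (wprod g u))" for f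
    by (rule ext) (simp add: gr_eval_def gr_smult_def sum_fun_apply)
  have "gmul (gr_eval g f) (gr_eval g h) = (\<Sum>u\<in>fa_supp f. \<Sum>v\<in>fa_supp h.
      gr_smult (h v) (gr_smult (f u) (gmul (wprod g u) (wprod g v))))"
    unfolding eval_sum gmul_sum_left unfolding gmul_sum_right gmul_smult_left gmul_smult_right ..
  then show "gr_eval g (fa_mult f h) C = gmul (gr_eval g f) (gr_eval g h) C"
    unfolding gr_eval_def sum_fa_supp_fa_mult[OF assms]
    by (simp add: wprod_append sum_fun_apply gr_smult_def ac_simps)
qed

lemma gr_eval_zero: "gr_eval g (\<lambda>_. 0) = 0"
  by (rule ext) (simp add: gr_eval_def fa_supp_def)

lemma gr_eval_var: "finitary (g t) \<Longrightarrow> gr_eval g (fa_var t) = g t"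
proof -
  assume "finitary (g t)"
  have supp: "fa_supp (fa_var t :: 'k::field fa) = {[t]}"
    by (auto simp: fa_supp_def fa_var_def)
  show ?thesis
    unfolding gr_eval_def supp using \<open>finitary (g t)\<close> by (simp add: fa_var_def gmul_gone_right)
qed

fun gpow :: "'k::field gr \<Rightarrow> nat \<Rightarrow> 'k gr" where
  "gpow a 0 = 0"
| "gpow a (Suc 0) = a"
| "gpow a (Suc (Suc n)) = gmul a (gpow a (Suc n))"

lemma gr_eval_pow: "f \<in> FA \<Longrightarrow> gr_eval g (fa_pow f n) = gpow (gr_eval g f) n"
  by (induction f n rule: fa_pow.induct) (auto simp: gr_eval_zero gr_eval_mult FA_pow)

lemma gr_eval_comm:
  assumes "f \<in> FA" "h \<in> FA"
  shows "gr_eval g (fa_comm f h) =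
    gmul (gr_eval g f) (gr_eval g h) + gr_smult (-1) (gmul (gr_eval g h) (gr_eval g f))"
  using assms by (simp add: fa_comm_def gr_eval_add gr_eval_smult gr_eval_mult FA_mult FA_smult)

lemma gr_eval_kappa:
  assumes "f \<in> FA" "h \<in> FA"
  shows "gr_eval g (kappa p f h) =
    gmul (gmul (gmul (gr_eval g f) (gr_eval g h) + gr_smult (-1) (gmul (gr_eval g h) (gr_eval g f)))
      (gpow (gr_eval g f) (p - 1))) (gpow (gr_eval g h) (p - 1))"
  using assms by (simp add: kappa_def gr_eval_mult gr_eval_comm gr_eval_pow FA_mult FA_comm FA_pow)

section \<open>Products of the elements \<open>1 + e\<^sub>t\<close>\<close>

definition gen :: "nat \<Rightarrow> 'k::field gr" where
  "gen t = gmono {t}"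

definition unit_gen :: "nat \<Rightarrow> 'k::field gr" where
  "unit_gen t = gone + gen t"

fun gen_sum :: "nat list \<Rightarrow> 'k::field gr" where
  "gen_sum [] = 0"
| "gen_sum (t # w) = gen t + gen_sum w"

lemma odd_supp_gen [simp]: "odd_supp (gen t)"
  by (simp add: odd_supp_def gen_def gmono_def)

lemma finitary_gen [simp]: "finitary (gen t)"
  by (simp add: gen_def)

lemma gen_sum_append: "gen_sum (u @ v) = gen_sum u + gen_sum v"
  by (induction u) (auto simp: add.assoc)

lemma gen_sum_apply:
  "gen_sum w A = (if \<exists>t. A = {t} then of_nat (count_list w (the_elem A)) else 0)"
  by (induction w) (auto simp: gen_def gmono_def)

lemma odd_supp_gen_sum [simp]: "odd_supp (gen_sum w)"
  by (auto simp: odd_supp_def gen_sum_apply split: if_splits)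

lemma gen_sum_eq_0:
  assumes "\<forall>t. of_nat (count_list w t) = (0::'k::field)"
  shows "gen_sum w = (0 :: 'k gr)"
  using assms by (auto simp: gen_sum_apply)

lemma odd_part_wprod_unit_gen:
  assumes "(2::'k::field) \<noteq> 0"
  shows "odd_part (wprod unit_gen w) = gmul (gen_sum w) (even_part (wprod unit_gen w) :: 'k gr)"
proof (induction w)
  case Nil
  have "odd_part (gone :: 'k gr) = 0"
    by (rule ext) (simp add: odd_part_def gmono_def)
  then show ?case
    by (simp only: wprod_Nil gen_sum.simps gmul_zero_left)
next
  case (Cons t w)
  let ?P = "wprod unit_gen w :: 'k gr" and ?x = "gen t :: 'k gr" and ?N = "gen_sum w :: 'k gr"
  let ?E = "even_part ?P" and ?O = "odd_part ?P"
  have P: "wprod unit_gen (t # w) = ?P + gmul ?x ?P"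
    by (simp add: unit_gen_def gmul_add_left gmul_gone_left)
  have even: "even_part (wprod unit_gen (t # w)) = ?E + gmul ?x ?O"
    unfolding P even_part_add by (simp add: even_part_gmul_odd)
  have odd: "odd_part (wprod unit_gen (t # w)) = ?O + gmul ?x ?E"
    unfolding P odd_part_add by (simp add: odd_part_gmul_odd)
  have xxO: "gmul ?x (gmul ?x ?O) = 0"
    by (simp add: gmul_assoc[symmetric] gmul_odd_self[OF odd_supp_gen assms])
  have "gmul ?N ?x = - gmul ?x ?N"
    by (rule gmul_anticommute_odd) simp_all
  then have NxO: "gmul ?N (gmul ?x ?O) = 0"
    unfolding Cons.IH
    by (simp add: gmul_assoc[symmetric] gmul_uminus_left)
      (simp add: gmul_assoc[of ?x ?N ?N] gmul_odd_self[OF odd_supp_gen_sum assms])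
  have "gmul (gen_sum (t # w)) (even_part (wprod unit_gen (t # w))) =
      gmul ?x ?E + gmul ?x (gmul ?x ?O) + gmul ?N ?E + gmul ?N (gmul ?x ?O)"
    unfolding even by (simp add: gmul_add_left gmul_add_right add.assoc)
  also have "\<dots> = ?O + gmul ?x ?E"
    using xxO NxO Cons.IH by (simp add: add.commute)
  finally show ?case
    using odd by (simp only:)
qed

text \<open>Each product is \<open>E + N E\<close> with \<open>E\<close> even and \<open>N\<close> the sum of its generators; the two \<open>N\<close>
  cancel since every generator occurs a multiple of the characteristic times in total.\<close>

lemma wprod_unit_gen_commute:
  assumes two: "(2::'k::field) \<noteq> 0"
    and counts: "\<forall>t. of_nat (count_list (u @ v) t) = (0::'k)"
  shows "gmul (wprod unit_gen u) (wprod unit_gen v) = (gmul (wprod unit_gen v) (wprod unit_gen u) :: 'k gr)"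
proof -
  let ?X = "wprod unit_gen u :: 'k gr" and ?Y = "wprod unit_gen v :: 'k gr"
  let ?E1 = "even_part ?X" and ?O1 = "odd_part ?X" and ?E2 = "even_part ?Y" and ?O2 = "odd_part ?Y"
  let ?N = "gen_sum u :: 'k gr"
  have O1: "?O1 = gmul ?N ?E1"
    by (rule odd_part_wprod_unit_gen[OF two])
  have "gen_sum u + gen_sum v = (0 :: 'k gr)"
    using gen_sum_eq_0[OF counts] by (simp add: gen_sum_append)
  then have "gen_sum v = - ?N"
    by (simp add: eq_neg_iff_add_eq_0 add.commute)
  then have O2: "?O2 = - gmul ?N ?E2"
    unfolding odd_part_wprod_unit_gen[OF two] by (simp add: gmul_uminus_left)
  have OO: "gmul ?O1 ?O2 = 0"
  proof -
    have "gmul ?E1 (gmul ?N ?E2) = gmul ?N (gmul ?E1 ?E2)"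
      by (simp add: gmul_assoc[symmetric] gmul_commute_even[OF even_supp_even_part, of ?N ?X])
    then have "gmul ?O1 ?O2 = - gmul ?N (gmul ?N (gmul ?E1 ?E2))"
      unfolding O1 O2 by (simp add: gmul_uminus_right gmul_assoc)
    also have "\<dots> = - gmul (gmul ?N ?N) (gmul ?E1 ?E2)"
      by (simp add: gmul_assoc)
    also have "\<dots> = 0"
      by (simp add: gmul_odd_self[OF odd_supp_gen_sum two])
    finally show ?thesis .
  qed
  have OO': "gmul ?O2 ?O1 = 0"
    using gmul_anticommute_odd[OF odd_supp_odd_part odd_supp_odd_part, of ?X ?Y] OO by simp
  have "gmul ?X ?Y = gmul ?E1 ?Y + gmul ?O1 ?E2 + gmul ?O1 ?O2"
    by (metis even_part_plus_odd_part gmul_add_left gmul_add_right add.assoc)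
  also have "\<dots> = gmul ?Y ?E1 + gmul ?E2 ?O1 + gmul ?O2 ?O1"
    using OO OO' by (simp add: gmul_commute_even[OF even_supp_even_part])
  also have "\<dots> = gmul ?Y ?X"
    by (metis even_part_plus_odd_part gmul_add_left gmul_add_right add.assoc)
  finally show ?thesis .
qed

lemma wprod_unit_gen_Cons:
  assumes "finite C"
  shows "wprod unit_gen (t # w) C = wprod unit_gen w C +
    (if t \<in> C then gr_sign {t} (C - {t}) * wprod unit_gen w (C - {t}) else (0::'k::field))"
  using assms by (simp add: unit_gen_def gmul_add_left gmul_gone_left gen_def gmul_gmono_left)

lemma wprod_unit_gen_nonzero: "wprod unit_gen w C \<noteq> (0::'k::field) \<Longrightarrow> C \<subseteq> set w"
proof (induction w arbitrary: C)
  case Nil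
  then show ?case
    by (cases "C = {}") (auto simp: gmono_def)
next
  case (Cons t w)
  then have "gmul (unit_gen t) (wprod unit_gen w) C \<noteq> (0::'k)"
    by (simp only: wprod_Cons not_False_eq_True)
  then obtain B where "B \<subseteq> C" "unit_gen t B \<noteq> (0::'k)" "wprod unit_gen w (C - B) \<noteq> (0::'k)"
    by (rule gmul_nonzero)
  moreover have "unit_gen t B = (if B = {} then 1 else 0) + (if B = {t} then 1 else (0::'k))"
    by (simp add: unit_gen_def gen_def gmono_def)
  ultimately have "B \<subseteq> {t}"
    by (auto split: if_splits)
  then show ?case
    using Cons.IH \<open>B \<subseteq> C\<close> \<open>wprod unit_gen w (C - B) \<noteq> 0\<close> by auto
qed

lemma gpow_gone_plus:
  assumes "odd_supp x" "finitary x" "(2::'k::field) \<noteq> 0"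
  shows "gpow (gone + x) (Suc n) = gone + gr_smult (of_nat (Suc n)) (x :: 'k gr)"
proof (induction n)
  case (Suc n)
  have "gpow (gone + x) (Suc (Suc n)) = gmul (gone + x) (gone + gr_smult (of_nat (Suc n)) x)"
    using Suc by (simp only: gpow.simps)
  also have "\<dots> = gone + gr_smult (of_nat (Suc n)) x + x + gr_smult (of_nat (Suc n)) (gmul x x)"
    using assms(2)
    by (simp add: gmul_add_left gmul_add_right gmul_gone_left gmul_gone_right gmul_smult_right
        gr_smult_add add.assoc)
  also have "\<dots> = gone + gr_smult (of_nat (Suc (Suc n))) x"
    by (rule ext) (simp add: gmul_odd_self[OF assms(1,3)] gr_smult_def algebra_simps)
  finally show ?case .
qed (simp add: gr_smult_def)

lemma gr_eval_unit_gen_kappa: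
  assumes "a < b" "2 \<le> p" and two: "(2::'k::field) \<noteq> 0"
  shows "gr_eval unit_gen (kappa p (fa_var a) (fa_var b)) = gr_smult 2 (gmono {a, b} :: 'k gr)"
proof -
  let ?a = "gen a :: 'k gr" and ?b = "gen b :: 'k gr"
  have var: "gr_eval unit_gen (fa_var t) = gone + (gen t :: 'k gr)" for t
  proof -
    have "finitary (unit_gen t :: 'k gr)"
      by (simp add: unit_gen_def)
    then show ?thesis
      by (simp only: gr_eval_var unit_gen_def)
  qed
  obtain q where q: "p - 1 = Suc q"
    using assms(2) by (cases "p - 1") auto
  have pow: "gpow (gone + gen t) (p - 1) = gone + gr_smult (of_nat (p - 1)) (gen t :: 'k gr)" for t
    unfolding q by (rule gpow_gone_plus) (simp_all add: two)
  have ba: "gmul ?b ?a = - gmul ?a ?b"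
    by (rule gmul_anticommute_odd) simp_all
  have comm: "gmul (gone + ?a) (gone + ?b) + gr_smult (-1) (gmul (gone + ?b) (gone + ?a)) =
      gr_smult 2 (gmul ?a ?b)"
    by (rule ext) (simp add: gmul_add_left gmul_add_right gmul_gone_left gmul_gone_right ba
        gr_smult_def algebra_simps)
  have "gmul (gmul ?a ?b) ?a = 0"
    by (simp add: gmul_assoc ba gmul_uminus_right gmul_assoc[symmetric]
        gmul_odd_self[OF odd_supp_gen two])
  moreover have "gmul (gmul ?a ?b) ?b = 0"
    by (simp add: gmul_assoc gmul_odd_self[OF odd_supp_gen two])
  ultimately have "gr_eval unit_gen (kappa p (fa_var a) (fa_var b)) = gr_smult 2 (gmul ?a ?b)"
    unfolding gr_eval_kappa[OF FA_var FA_var] var comm pow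
    by (simp add: gmul_add_right gmul_smult_left gmul_smult_right gmul_gone_right)
  also have "gmul ?a ?b = gmono {a, b}"
    unfolding gen_def using gmul_gmono_gmono[of "{a}" "{b}"] assms(1) by (simp add: insert_commute)
  finally show ?thesis .
qed

lemma gr_eval_unit_gen_w_elt:
  assumes "2 \<le> p" "(2::'k::field) \<noteq> 0" "1 \<le> k"
  shows "gr_eval unit_gen (w_elt p k) = gr_smult (2 ^ k) (gmono {1..2*k} :: 'k gr)"
  using assms(3)
proof (induction k rule: nat_induct_at_least)
  case base
  have "{1..2} = {1, 2::nat}"
    by auto
  then show ?case
    by (simp add: gr_eval_unit_gen_kappa assms(1,2))
next
  case (Suc k)
  have "{1..2*k} \<union> {2 * Suc k - 1, 2 * Suc k} = {1..2 * Suc k}"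
    by auto
  then have blocks: "gmul (gmono {1..2*k}) (gmono {2 * Suc k - 1, 2 * Suc k}) = (gmono {1..2 * Suc k} :: 'k gr)"
    using gmul_gmono_gmono[of "{1..2*k}" "{2 * Suc k - 1, 2 * Suc k}"] by auto
  have step: "w_elt p (Suc k) = fa_mult (w_elt p k) (kappa p (fa_var (2 * Suc k - 1)) (fa_var (2 * Suc k)))"
    using Suc.hyps by (cases k) auto
  have "gr_eval unit_gen (w_elt p (Suc k)) = gmul (gr_smult (2 ^ k) (gmono {1..2*k}))
      (gr_smult 2 (gmono {2 * Suc k - 1, 2 * Suc k}) :: 'k gr)"
    unfolding step gr_eval_mult[OF FA_w_elt FA_kappa[OF FA_var FA_var]] Suc.IH
    by (subst gr_eval_unit_gen_kappa) (simp_all add: assms(1,2))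
  also have "\<dots> = gr_smult (2 ^ Suc k) (gmono {1..2 * Suc k})"
    unfolding gmul_smult_left gmul_smult_right blocks by (rule ext) (simp add: gr_smult_def)
  finally show ?case .
qed

section \<open>The coefficient functional\<close>

lemma two_nonzero_if_CHAR_gt_2: "2 < CHAR('k::field) \<Longrightarrow> (2::'k) \<noteq> 0"
  using of_nat_eq_0_iff_char_dvd[of 2, where 'a='k] by (auto dest: nat_dvd_not_less)

context
  fixes m p :: nat
begin

text \<open>The pairs \<open>{a, a + 1}\<close> with \<open>a = pair_idx t j\<close> are pairwise disjoint and lie above \<open>2m\<close>;
  \<open>pair_dom\<close> indexes the \<open>p - 1\<close> pairs attached to each variable \<open>x\<^sub>t\<close>, \<open>1 \<le> t \<le> 2m\<close>.\<close>

definition pair_idx :: "nat \<Rightarrow> nat \<Rightarrow> nat" where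
  "pair_idx t j = 2 * (2 * m + 1 + t * p + j)"

definition pair :: "nat \<Rightarrow> nat \<Rightarrow> nat set" where
  "pair t j = {pair_idx t j, Suc (pair_idx t j)}"

definition pair_dom :: "(nat \<times> nat) set" where
  "pair_dom = {1..2*m} \<times> {..<p-1}"

definition pairs_of :: "(nat \<times> nat) set \<Rightarrow> nat set" where
  "pairs_of J = (\<Union>(t, j)\<in>J. pair t j)"

definition pair_mult :: "(nat \<times> nat) set \<Rightarrow> nat \<Rightarrow> nat" where
  "pair_mult J t = card {j. (t, j) \<in> J}"

definition pair_gen :: "nat \<Rightarrow> 'k::field gr" where
  "pair_gen t = (if t \<in> {1..2*m} then gen t + (\<Sum>j<p-1. gmono (pair t j)) else 0)"

definition balanced :: "nat list \<Rightarrow> nat set \<Rightarrow> (nat \<times> nat) set \<Rightarrow> bool" where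
  "balanced w C J \<longleftrightarrow> set w \<subseteq> {1..2*m} \<and>
     (\<forall>t\<in>{1..2*m}. pair_mult J t + (if t \<in> C then 1 else 0) = count_list w t)"

text \<open>Each pair of \<open>t\<close> in \<open>J\<close> is absorbed by a different occurrence of \<open>x\<^sub>t\<close>, which can happen
  in \<open>(pair_mult J t)!\<close> ways.\<close>

definition pair_coeff :: "nat list \<Rightarrow> nat set \<Rightarrow> (nat \<times> nat) set \<Rightarrow> 'k::field" where
  "pair_coeff w C J = (if balanced w C J then of_nat (\<Prod>t\<in>{1..2*m}. fact (pair_mult J t)) else 0)"

definition top_set :: "nat set" where
  "top_set = {1..2*m} \<union> pairs_of pair_dom"

lemma finite_pair [simp]: "finite (pair t j)"
  and finite_pair_dom [simp]: "finite pair_dom"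
  and finite_top_set [simp]: "finite top_set"
  by (simp_all add: pair_def pair_dom_def top_set_def pairs_of_def)

lemma finite_pairs_of: "finite J \<Longrightarrow> finite (pairs_of J)"
  by (auto simp: pairs_of_def)

lemma finite_subset_pair_dom: "J \<subseteq> pair_dom \<Longrightarrow> finite J"
  using finite_pair_dom finite_subset by blast

lemma pair_gt: "s \<le> 2 * m \<Longrightarrow> x \<in> pair t j \<Longrightarrow> s < x"
  by (auto simp: pair_def pair_idx_def)

lemma pairs_of_gt: "s \<le> 2 * m \<Longrightarrow> x \<in> pairs_of J \<Longrightarrow> s < x"
  by (auto simp: pairs_of_def dest: pair_gt)

lemma pairs_of_disjoint: "C \<subseteq> {1..2*m} \<Longrightarrow> C \<inter> pairs_of J = {}"
  by (fastforce dest: pairs_of_gt)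

lemma pair_overlap:
  assumes "j < p" "j' < p" "x \<in> pair t j" "x \<in> pair t' j'"
  shows "t = t' \<and> j = j'"
proof -
  have "pair_idx t j = pair_idx t' j'"
    using assms(3,4) by (auto simp: pair_def pair_idx_def) presburger+
  then have "t * p + j = t' * p + j'"
    by (simp add: pair_idx_def)
  then have "(t * p + j) div p = (t' * p + j') div p" "(t * p + j) mod p = (t' * p + j') mod p"
    by simp_all
  then show ?thesis
    using assms(1,2) by simp
qed

lemma pair_mult_remove:
  assumes "J \<subseteq> pair_dom" "(t, j) \<in> J"
  shows "pair_mult (J - {(t, j)}) s = pair_mult J s - (if s = t then 1 else 0)"
    and "1 \<le> pair_mult J t"
proof -
  have fin: "finite {j. (s, j) \<in> J}" for s
    by (rule finite_subset[of _ "{..<p-1}"]) (use assms(1) in \<open>auto simp: pair_dom_def\<close>)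
  have "{j'. (s, j') \<in> J - {(t, j)}} = {j'. (s, j') \<in> J} - (if s = t then {j} else {})"
    by auto
  then show "pair_mult (J - {(t, j)}) s = pair_mult J s - (if s = t then 1 else 0)"
    using assms(2) fin by (simp add: pair_mult_def)
  show "1 \<le> pair_mult J t"
    using assms(2) fin[of t] by (auto simp: pair_mult_def Suc_le_eq card_gt_0_iff)
qed

lemma pair_subset_iff:
  assumes "t \<in> {1..2*m}" "j < p - 1" "C \<subseteq> {1..2*m}" "J \<subseteq> pair_dom"
  shows "pair t j \<subseteq> C \<union> pairs_of J \<longleftrightarrow> (t, j) \<in> J"
proof
  assume sub: "pair t j \<subseteq> C \<union> pairs_of J"
  have "pair_idx t j \<in> pair t j"
    by (simp add: pair_def)
  moreover have "pair_idx t j \<notin> C"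
    using assms(3) pair_gt[of "pair_idx t j"] by (fastforce simp: pair_def)
  ultimately obtain t' j' where "(t', j') \<in> J" "pair_idx t j \<in> pair t' j'"
    using sub by (auto simp: pairs_of_def)
  moreover from this(1) have "j' < p"
    using assms(4) by (auto simp: pair_dom_def)
  ultimately show "(t, j) \<in> J"
    using pair_overlap[of j j' "pair_idx t j" t t'] assms(2) by (auto simp: pair_def)
qed (auto simp: pairs_of_def)

lemma diff_pair:
  assumes "C \<subseteq> {1..2*m}" "J \<subseteq> pair_dom" "(t, j) \<in> J"
  shows "(C \<union> pairs_of J) - pair t j = C \<union> pairs_of (J - {(t, j)})"
proof -
  have "j < p"
    using assms by (auto simp: pair_dom_def)
  have "x \<notin> pair t j" if "x \<in> pair t' j'" "(t', j') \<in> J" "(t', j') \<noteq> (t, j)" for x t' j'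
  proof
    assume "x \<in> pair t j"
    moreover have "j' < p"
      using that(2) assms(2) by (auto simp: pair_dom_def)
    ultimately show False
      using pair_overlap[OF \<open>j < p\<close> \<open>j' < p\<close>, of x t t'] that by auto
  qed
  moreover have "C \<inter> pair t j = {}"
    using assms(1) pair_gt by fastforce
  ultimately show ?thesis
    by (auto simp: pairs_of_def)
qed

lemma sum_pair_mult:
  assumes "J \<subseteq> pair_dom"
  shows "(\<Sum>j<p-1. if (t, j) \<in> J then c else 0) = of_nat (pair_mult J t) * (c::'k::field)"
proof -
  have "{j \<in> {..<p-1}. (t, j) \<in> J} = {j. (t, j) \<in> J}"
    using assms by (auto simp: pair_dom_def)
  then show ?thesis
    by (simp add: sum.inter_filter[symmetric] pair_mult_def)
qed

lemma balanced_Cons_gen: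
  assumes "t \<in> {1..2*m}" "t \<in> C"
  shows "balanced w (C - {t}) J \<longleftrightarrow> balanced (t # w) C J"
  using assms by (auto simp: balanced_def)

lemma balanced_Cons_pair:
  assumes "J \<subseteq> pair_dom" "(t, j) \<in> J"
  shows "balanced w C (J - {(t, j)}) \<longleftrightarrow> balanced (t # w) C J"
proof -
  have t: "t \<in> {1..2*m}"
    using assms by (auto simp: pair_dom_def)
  have "pair_mult (J - {(t, j)}) s + c = count_list w s \<longleftrightarrow> pair_mult J s + c = count_list (t # w) s"
    for s c
    using pair_mult_remove[OF assms] by (cases "s = t") auto
  then show ?thesis
    using t by (auto simp: balanced_def)
qed

lemma pair_coeff_Cons_gen:
  assumes "t \<in> {1..2*m}" "t \<in> C"
  shows "pair_coeff w (C - {t}) J = (pair_coeff (t # w) C J :: 'k::field)"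
  using balanced_Cons_gen[OF assms] by (simp add: pair_coeff_def)

lemma pair_coeff_Cons_pair:
  assumes "J \<subseteq> pair_dom" "(t, j) \<in> J"
  shows "of_nat (pair_mult J t) * pair_coeff w C (J - {(t, j)}) = (pair_coeff (t # w) C J :: 'k::field)"
proof -
  let ?V = "{1..2*m}"
  have t: "t \<in> ?V"
    using assms by (auto simp: pair_dom_def)
  obtain k where k: "pair_mult J t = Suc k"
    using pair_mult_remove(2)[OF assms] by (cases "pair_mult J t") auto
  have rem: "(\<Prod>s\<in>?V. fact (pair_mult (J - {(t, j)}) s)) = fact k * (\<Prod>s\<in>?V - {t}. fact (pair_mult J s))"
    using t k by (simp add: prod.remove pair_mult_remove[OF assms] cong: prod.cong_simp)
  have full: "(\<Prod>s\<in>?V. fact (pair_mult J s)) = fact (Suc k) * (\<Prod>s\<in>?V - {t}. fact (pair_mult J s))"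
    using t k by (simp only: prod.remove[OF finite_atLeastAtMost t])
  have "pair_mult J t * (\<Prod>s\<in>?V. fact (pair_mult (J - {(t, j)}) s)) =
      (\<Prod>s\<in>?V. fact (pair_mult J s) :: nat)"
    unfolding k rem full by (simp only: fact_Suc of_nat_id mult.assoc)
  then have "of_nat (pair_mult J t) * of_nat (\<Prod>s\<in>?V. fact (pair_mult (J - {(t, j)}) s)) =
      (of_nat (\<Prod>s\<in>?V. fact (pair_mult J s)) :: 'k)"
    by (simp only: of_nat_mult[symmetric])
  then show ?thesis
    unfolding pair_coeff_def balanced_Cons_pair[OF assms]
    by (cases "balanced (t # w) C J") (simp_all only: if_True if_False mult_zero_right)
qed

lemma pair_coeff_Cons_unpaired:
  assumes "t \<in> {1..2*m}" "pair_mult J t = 0" "pair_coeff (t # w) C J \<noteq> (0::'k::field)"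
  shows "t \<in> C" "t \<notin> set w"
proof -
  have "pair_mult J t + (if t \<in> C then 1 else 0) = count_list (t # w) t"
    using assms(1,3) by (auto simp: pair_coeff_def balanced_def split: if_splits)
  then show "t \<in> C" "t \<notin> set w"
    using assms(2) by (auto simp: count_list_0_iff split: if_splits)
qed

lemma pair_coeff_Nil: "C = {} \<and> J = {} \<Longrightarrow> pair_coeff [] C J = (1::'k::field)"
  by (simp add: pair_coeff_def balanced_def pair_mult_def)

lemma wprod_pair_gen_Cons:
  assumes "t \<in> {1..2*m}" "finite S"
  shows "wprod pair_gen (t # w) S =
    (if t \<in> S then gr_sign {t} (S - {t}) * wprod pair_gen w (S - {t}) else (0::'k::field)) +
    (\<Sum>j<p-1. if pair t j \<subseteq> S
       then gr_sign (pair t j) (S - pair t j) * wprod pair_gen w (S - pair t j) else 0)"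
  using assms
  by (simp add: pair_gen_def gmul_add_left gmul_sum_left sum_fun_apply gen_def gmul_gmono_left)

lemma sum_pair_coeff_remove:
  assumes J: "J \<subseteq> pair_dom" and j0: "(t, j0) \<in> J"
  shows "(\<Sum>j<p-1. if (t, j) \<in> J then pair_coeff w C (J - {(t, j)}) else 0) =
    (pair_coeff (t # w) C J :: 'k::field)"
proof -
  have "pair_coeff w C (J - {(t, j)}) = (pair_coeff w C (J - {(t, j0)}) :: 'k)" if "(t, j) \<in> J" for j
    using pair_mult_remove(1)[OF J that] pair_mult_remove(1)[OF J j0]
    by (simp add: pair_coeff_def balanced_def)
  then have "(\<Sum>j<p-1. if (t, j) \<in> J then pair_coeff w C (J - {(t, j)}) else 0) =
      (\<Sum>j<p-1. if (t, j) \<in> J then pair_coeff w C (J - {(t, j0)}) else (0::'k))"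
    by (intro sum.cong) auto
  also have "\<dots> = pair_coeff (t # w) C J"
    unfolding sum_pair_mult[OF J] by (rule pair_coeff_Cons_pair[OF J j0])
  finally show ?thesis .
qed

lemma wprod_pair_gen_pair_summand:
  assumes t: "t \<in> {1..2*m}" and j: "j < p - 1" and C: "C \<subseteq> {1..2*m}" and J: "J \<subseteq> pair_dom"
    and IH: "\<And>J'. J' \<subseteq> pair_dom \<Longrightarrow>
      wprod pair_gen w (C \<union> pairs_of J') = pair_coeff w C J' * (wprod unit_gen w C :: 'k::field)"
  shows "(if pair t j \<subseteq> C \<union> pairs_of J then gr_sign (pair t j) (C \<union> pairs_of J - pair t j)
      * wprod pair_gen w (C \<union> pairs_of J - pair t j) else 0) =
    (if (t, j) \<in> J then pair_coeff w C (J - {(t, j)}) * wprod unit_gen w C else (0::'k))"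
proof (cases "(t, j) \<in> J")
  case True
  have "finite (C \<union> pairs_of J)"
    using C J by (auto intro: finite_subset finite_pairs_of finite_subset_pair_dom)
  then have "gr_sign (pair t j) (C \<union> pairs_of J - pair t j) = (1::'k)"
    unfolding pair_def by (intro gr_sign_consecutive) auto
  moreover have "wprod pair_gen w (C \<union> pairs_of J - pair t j) =
      pair_coeff w C (J - {(t, j)}) * (wprod unit_gen w C :: 'k)"
    unfolding diff_pair[OF C J True] by (rule IH) (use J in auto)
  ultimately show ?thesis
    using True pair_subset_iff[OF t j C J] by simp
qed (use pair_subset_iff[OF t j C J] in simp)

lemma wprod_pair_gen_pair_terms:
  assumes t: "t \<in> {1..2*m}" and C: "C \<subseteq> {1..2*m}" and J: "J \<subseteq> pair_dom"
    and IH: "\<And>J'. J' \<subseteq> pair_dom \<Longrightarrow>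
      wprod pair_gen w (C \<union> pairs_of J') = pair_coeff w C J' * (wprod unit_gen w C :: 'k::field)"
  shows "(\<Sum>j<p-1. if pair t j \<subseteq> C \<union> pairs_of J then gr_sign (pair t j) (C \<union> pairs_of J - pair t j)
      * wprod pair_gen w (C \<union> pairs_of J - pair t j) else 0) =
    pair_coeff (t # w) C J * (wprod unit_gen w C :: 'k)"
proof -
  let ?P = "wprod unit_gen w C :: 'k"
  have "(\<Sum>j<p-1. if pair t j \<subseteq> C \<union> pairs_of J then gr_sign (pair t j) (C \<union> pairs_of J - pair t j)
      * wprod pair_gen w (C \<union> pairs_of J - pair t j) else 0) =
    (\<Sum>j<p-1. if (t, j) \<in> J then pair_coeff w C (J - {(t, j)}) else 0) * ?P"
    unfolding sum_distrib_right
    by (intro sum.cong refl) (simp add: wprod_pair_gen_pair_summand[OF t _ C J IH])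
  also have "\<dots> = pair_coeff (t # w) C J * ?P"
  proof (cases "\<exists>j0. (t, j0) \<in> J")
    case True
    then show ?thesis
      using sum_pair_coeff_remove[OF J] by auto
  next
    case False
    then have "pair_mult J t = 0"
      by (simp add: pair_mult_def)
    have "pair_coeff (t # w) C J * ?P = 0"
    proof (rule ccontr)
      assume "pair_coeff (t # w) C J * ?P \<noteq> 0"
      then have "pair_coeff (t # w) C J \<noteq> (0::'k)" "?P \<noteq> 0"
        by auto
      with pair_coeff_Cons_unpaired[OF t \<open>pair_mult J t = 0\<close>] wprod_unit_gen_nonzero
      show False
        by blast
    qed
    then show ?thesis
      using False by simp
  qed
  finally show ?thesis .
qed

lemma wprod_pair_gen_Nil:
  assumes "J \<subseteq> pair_dom"
  shows "wprod pair_gen [] (C \<union> pairs_of J) = pair_coeff [] C J * (wprod unit_gen [] C :: 'k::field)"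
proof (cases "C = {} \<and> J = {}")
  case False
  then have "C \<union> pairs_of J \<noteq> {}"
    by (auto simp: pairs_of_def pair_def)
  moreover have "pair_coeff [] C J = (0::'k)" if "C = {}"
  proof -
    from False that obtain t j where "(t, j) \<in> J"
      by auto
    then have "t \<in> {1..2*m}" "1 \<le> pair_mult J t"
      using pair_mult_remove(2)[OF assms] assms by (auto simp: pair_dom_def)
    then have "\<not> balanced [] C J"
      unfolding balanced_def by force
    then show ?thesis
      by (simp add: pair_coeff_def)
  qed
  ultimately show ?thesis
    by (auto simp: gmono_def)
qed (simp add: pair_coeff_Nil pairs_of_def)

lemma wprod_pair_gen_gen_term:
  assumes t: "t \<in> {1..2*m}" and C: "C \<subseteq> {1..2*m}" and J: "J \<subseteq> pair_dom"
    and IH: "wprod pair_gen w ((C - {t}) \<union> pairs_of J) =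
      pair_coeff w (C - {t}) J * (wprod unit_gen w (C - {t}) :: 'k::field)"
  shows "(if t \<in> C \<union> pairs_of J then gr_sign {t} (C \<union> pairs_of J - {t}) *
      wprod pair_gen w (C \<union> pairs_of J - {t}) else 0) =
    (if t \<in> C then gr_sign {t} (C - {t}) * (pair_coeff (t # w) C J * wprod unit_gen w (C - {t}))
     else (0::'k))"
proof -
  have ordered: "\<forall>x\<in>{t}. \<forall>y\<in>pairs_of J. x < y"
    using t pairs_of_gt by auto
  show ?thesis
  proof (cases "t \<in> C")
    case True
    have "C \<union> pairs_of J - {t} = (C - {t}) \<union> pairs_of J"
      using ordered by auto
    moreover have "gr_sign {t} ((C - {t}) \<union> pairs_of J) = (gr_sign {t} (C - {t}) :: 'k)"
      using C pairs_of_disjoint[of "C - {t}" J] gr_sign_ordered[OF ordered]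
        finite_pairs_of[OF finite_subset_pair_dom[OF J]]
      by (subst gr_sign_Un_right) (auto intro: finite_subset)
    ultimately show ?thesis
      using IH True unfolding pair_coeff_Cons_gen[OF t True] by simp
  qed (use ordered in auto)
qed

lemma wprod_pair_gen_eq:
  assumes "C \<subseteq> {1..2*m}" "J \<subseteq> pair_dom"
  shows "wprod pair_gen w (C \<union> pairs_of J) = pair_coeff w C J * (wprod unit_gen w C :: 'k::field)"
  using assms
proof (induction w arbitrary: C J)
  case Nil
  then show ?case
    by (rule_tac wprod_pair_gen_Nil)
next
  case (Cons t w)
  have finC: "finite C"
    using Cons.prems(1) finite_subset by blast
  have finS: "finite (C \<union> pairs_of J)"
    using finC finite_pairs_of[OF finite_subset_pair_dom[OF Cons.prems(2)]] by simp
  show ?case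
  proof (cases "t \<in> {1..2*m}")
    case False
    then have "pair_gen t = (0 :: 'k gr)" "pair_coeff (t # w) C J = (0::'k)"
      by (auto simp: pair_gen_def pair_coeff_def balanced_def)
    then show ?thesis
      by simp
  next
    case t: True
    have "C - {t} \<subseteq> {1..2*m}"
      using Cons.prems(1) by auto
    note gen_term = wprod_pair_gen_gen_term[OF t Cons.prems Cons.IH[OF this Cons.prems(2)]]
    have pair_terms: "(\<Sum>j<p-1. if pair t j \<subseteq> C \<union> pairs_of J
        then gr_sign (pair t j) (C \<union> pairs_of J - pair t j) * wprod pair_gen w (C \<union> pairs_of J - pair t j)
        else 0) = pair_coeff (t # w) C J * (wprod unit_gen w C :: 'k)"
      by (rule wprod_pair_gen_pair_terms[OF t Cons.prems]) (rule Cons.IH[OF Cons.prems(1)])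
    show ?thesis
      unfolding wprod_pair_gen_Cons[OF t finS] wprod_unit_gen_Cons[OF finC] gen_term pair_terms
      by (simp add: algebra_simps)
  qed
qed

lemma pair_gen_nonzero:
  assumes "pair_gen t B \<noteq> (0::'k::field)"
  shows "B \<subseteq> top_set" "B \<noteq> {}"
proof -
  have t: "t \<in> {1..2*m}"
    using assms by (auto simp: pair_gen_def split: if_splits)
  have "pair_gen t B = (if B = {t} then 1 else 0) + (\<Sum>j<p-1. if B = pair t j then 1 else (0::'k))"
    using t by (simp add: pair_gen_def gen_def gmono_def sum_fun_apply)
  then have B: "B = {t} \<or> (\<exists>j<p-1. B = pair t j)"
    using assms by (cases "B = {t}") (auto intro: ccontr)
  moreover have "pair t j \<subseteq> top_set" if "j < p - 1" for j
    using that t by (auto simp: top_set_def pairs_of_def pair_dom_def)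
  ultimately show "B \<subseteq> top_set"
    using t by (auto simp: top_set_def)
  from B show "B \<noteq> {}"
    by (auto simp: pair_def)
qed

lemma wprod_pair_gen_nonzero:
  "wprod pair_gen w C \<noteq> (0::'k::field) \<Longrightarrow> C \<subseteq> top_set \<and> (w \<noteq> [] \<longrightarrow> C \<noteq> {})"
proof (induction w arbitrary: C)
  case Nil
  then show ?case
    by (cases "C = {}") (auto simp: gmono_def)
next
  case (Cons t w)
  then have "gmul (pair_gen t) (wprod pair_gen w) C \<noteq> (0::'k)"
    by (simp only: wprod_Cons not_False_eq_True)
  then obtain B where "B \<subseteq> C" "pair_gen t B \<noteq> (0::'k)" "wprod pair_gen w (C - B) \<noteq> (0::'k)"
    by (rule gmul_nonzero)
  with pair_gen_nonzero[of t B] Cons.IH[of "C - B"] show ?case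
    by auto
qed

lemma gr_eval_pair_gen_nonzero:
  assumes "f \<in> FA" "gr_eval pair_gen f C \<noteq> (0::'k::field)"
  shows "C \<subseteq> top_set" "C \<noteq> {}"
proof -
  obtain w where w: "w \<in> fa_supp f" "f w * wprod pair_gen w C \<noteq> 0"
    using assms(2) unfolding gr_eval_def by (meson sum.neutral)
  moreover from w(1) have "w \<noteq> []"
    using FA_Nil[OF assms(1)] by (auto simp: fa_supp_def)
  ultimately show "C \<subseteq> top_set" "C \<noteq> {}"
    using wprod_pair_gen_nonzero[of w C] by auto
qed

lemma gr_eval_pair_gen_G0: "f \<in> FA \<Longrightarrow> gr_eval pair_gen f \<in> (G0 :: 'k::field gr set)"
proof -
  assume f: "f \<in> FA"
  have "{A. gr_eval pair_gen f A \<noteq> (0::'k)} \<subseteq> Pow top_set"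
    using gr_eval_pair_gen_nonzero[OF f] by auto
  then have "finite {A. gr_eval pair_gen f A \<noteq> (0::'k)}"
    by (rule finite_subset) simp
  moreover have "finite A \<and> A \<noteq> {}" if "gr_eval pair_gen f A \<noteq> (0::'k)" for A
    using gr_eval_pair_gen_nonzero[OF f that] finite_subset[OF _ finite_top_set] by auto
  ultimately show ?thesis
    by (simp add: G0_def)
qed

lemma fa_gr_hom_pair_gen: "fa_gr_hom (gr_eval pair_gen :: 'k::field fa \<Rightarrow> 'k gr)"
  unfolding fa_gr_hom_def
proof (intro conjI ballI allI)
  fix f g :: "'k fa"
  assume f: "f \<in> FA" and g: "g \<in> FA"
  show "gr_eval pair_gen (fa_add f g) = gr_add (gr_eval pair_gen f) (gr_eval pair_gen g)"
    unfolding gr_eval_add[OF f g] gr_add_def plus_fun_def ..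
  have "gr_eval pair_gen f {} = 0" "gr_eval pair_gen g {} = 0"
    using gr_eval_pair_gen_nonzero(2)[OF f, of "{}"] gr_eval_pair_gen_nonzero(2)[OF g, of "{}"] by auto
  then show "gr_eval pair_gen (fa_mult f g) = gr_mult (gr_eval pair_gen f) (gr_eval pair_gen g)"
    unfolding gr_eval_mult[OF f g] by (rule gr_mult_eq_gmul[symmetric])
qed (simp_all add: gr_eval_pair_gen_G0 gr_eval_smult)

definition top_coeff :: "'k::field fa \<Rightarrow> 'k" where
  "top_coeff f = gr_eval pair_gen f top_set"

lemma wprod_pair_gen_top:
  "wprod pair_gen w top_set = pair_coeff w {1..2*m} pair_dom * (wprod unit_gen w {1..2*m} :: 'k::field)"
  unfolding top_set_def by (rule wprod_pair_gen_eq) auto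

lemma pair_mult_pair_dom: "t \<in> {1..2*m} \<Longrightarrow> pair_mult pair_dom t = p - 1"
  by (simp add: pair_mult_def pair_dom_def)

lemma wprod_pair_gen_top_swap:
  assumes char: "of_nat p = (0::'k::field)" and two: "(2::'k) \<noteq> 0" and "1 \<le> p"
  shows "wprod pair_gen (u @ v) top_set = (wprod pair_gen (v @ u) top_set :: 'k)"
proof -
  have bal: "balanced (u @ v) C J \<longleftrightarrow> balanced (v @ u) C J" for C J
    by (auto simp: balanced_def)
  then have coeff: "pair_coeff (u @ v) C J = (pair_coeff (v @ u) C J :: 'k)" for C J
    by (simp add: pair_coeff_def)
  show ?thesis
  proof (cases "balanced (u @ v) {1..2*m} pair_dom")
    case True
    then have "count_list (u @ v) t = (if t \<in> {1..2*m} then p else 0)" for t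
      using \<open>1 \<le> p\<close> pair_mult_pair_dom by (auto simp: balanced_def count_list_0_iff)
    then have "\<forall>t. of_nat (count_list (u @ v) t) = (0::'k)"
      using char by simp
    then have "gmul (wprod unit_gen u) (wprod unit_gen v) = (gmul (wprod unit_gen v) (wprod unit_gen u) :: 'k gr)"
      by (rule wprod_unit_gen_commute[OF two])
    then show ?thesis
      unfolding wprod_pair_gen_top coeff unfolding wprod_append by simp
  qed (simp add: wprod_pair_gen_top pair_coeff_def bal)
qed

lemma top_coeff_add:
    "f \<in> FA \<Longrightarrow> g \<in> FA \<Longrightarrow> top_coeff (fa_add f g) = top_coeff f + (top_coeff g :: 'k::field)"
  and top_coeff_smult: "f \<in> FA \<Longrightarrow> top_coeff (fa_smult c f) = c * (top_coeff f :: 'k::field)"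
  by (simp_all add: top_coeff_def gr_eval_add gr_eval_smult gr_smult_def)

lemma top_coeff_mult:
  assumes "f \<in> FA" "g \<in> FA"
  shows "top_coeff (fa_mult f g) =
    (\<Sum>u\<in>fa_supp f. \<Sum>v\<in>fa_supp g. f u * g v * (wprod pair_gen (u @ v) top_set :: 'k::field))"
  unfolding top_coeff_def gr_eval_def by (rule sum_fa_supp_fa_mult[OF assms])

lemma top_coeff_comm:
  assumes "f \<in> FA" "g \<in> FA"
    and "of_nat p = (0::'k::field)" "(2::'k) \<noteq> 0" "1 \<le> p"
  shows "top_coeff (fa_comm f g) = (0::'k)"
proof -
  have "top_coeff (fa_mult g f) = (top_coeff (fa_mult f g) :: 'k)"
    unfolding top_coeff_mult[OF assms(1,2)] top_coeff_mult[OF assms(2,1)]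
    by (subst sum.swap) (simp add: wprod_pair_gen_top_swap[OF assms(3-5)] mult.commute)
  then show ?thesis
    using assms(1,2) by (simp add: fa_comm_def top_coeff_add top_coeff_smult FA_mult FA_smult)
qed

lemma S2_subset_endo_kernel_top_coeff:
  assumes "of_nat p = (0::'k::field)" "(2::'k) \<noteq> 0" "1 \<le> p"
  shows "(S2 :: 'k fa set) \<subseteq> endo_kernel top_coeff"
proof (rule S2_subset_endo_kernel[OF top_coeff_add top_coeff_smult])
  have "top_coeff (\<phi> (fa_comm (fa_var 1) (fa_var 2))) = (0::'k)" if "fa_endo \<phi>" for \<phi>
  proof -
    have "\<phi> (fa_var 1) \<in> FA" "\<phi> (fa_var 2) \<in> FA"
      using that FA_var by (auto simp: fa_endo_def)
    then show ?thesis
      unfolding fa_endo_comm[OF that FA_var FA_var] by (rule top_coeff_comm[OF _ _ assms])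
  qed
  then show "fa_comm (fa_var 1) (fa_var 2) \<in> endo_kernel (top_coeff :: 'k fa \<Rightarrow> 'k)"
    unfolding endo_kernel_def by (auto simp: FA_comm FA_var)
qed

lemma top_coeff_w_elt:
  assumes "2 \<le> p" "(2::'k::field) \<noteq> 0" "1 \<le> m"
  shows "top_coeff (w_elt p m :: 'k fa) = of_nat (fact (p - 1) ^ (2 * m)) * 2 ^ m"
proof -
  let ?V = "{1..2*m}" and ?c = "of_nat (fact (p - 1) ^ (2 * m)) :: 'k"
  have "pair_coeff w ?V pair_dom = ?c" if "w \<in> fa_supp (w_elt p m :: 'k fa)" for w
  proof -
    have "multideg (w_elt p m :: 'k fa) (\<lambda>t. if t \<in> ?V then p else 0)"
      by (rule multideg_w_elt) (use assms in auto)
    then have count: "count_list w t = (if t \<in> ?V then p else 0)" for t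
      using that unfolding multideg_def fa_supp_def by blast
    then have "set w \<subseteq> ?V"
      by (metis (full_types) count_list_0_iff subsetI)
    with count have "balanced w ?V pair_dom"
      using assms(1) by (simp add: balanced_def pair_mult_pair_dom)
    then show ?thesis
      by (simp add: pair_coeff_def pair_mult_pair_dom)
  qed
  then have "top_coeff (w_elt p m :: 'k fa) =
      (\<Sum>w\<in>fa_supp (w_elt p m :: 'k fa). w_elt p m w * (?c * wprod unit_gen w ?V))"
    unfolding top_coeff_def gr_eval_def wprod_pair_gen_top by (intro sum.cong) auto
  also have "\<dots> = ?c * gr_eval unit_gen (w_elt p m) ?V"
    by (simp add: gr_eval_def sum_distrib_left algebra_simps)
  also have "gr_eval unit_gen (w_elt p m) ?V = (2::'k) ^ m"
    using gr_eval_unit_gen_w_elt[OF assms] by (simp add: gr_smult_def gmono_def)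
  finally show ?thesis .
qed

lemma top_coeff_TG0: "f \<in> TG0 \<Longrightarrow> top_coeff f = (0::'k::field)"
proof -
  assume "f \<in> TG0"
  then have "gr_eval pair_gen f = (\<lambda>_. 0 :: 'k)"
    using fa_gr_hom_pair_gen unfolding TG0_def by blast
  then show ?thesis
    by (simp add: top_coeff_def)
qed

lemma top_coeff_S2_plus_TG0:
  assumes "of_nat p = (0::'k::field)" "(2::'k) \<noteq> 0" "1 \<le> p" "f \<in> S2_plus_TG0"
  shows "top_coeff f = (0::'k)"
proof -
  obtain a b :: "'k fa" where ab: "f = fa_add a b" "a \<in> S2" "b \<in> TG0"
    using assms(4) by (auto simp: S2_plus_TG0_def)
  then have a: "a \<in> endo_kernel top_coeff"
    using S2_subset_endo_kernel_top_coeff[OF assms(1-3)] by auto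
  then have "a \<in> FA" "top_coeff a = 0"
    by (simp add: endo_kernel_def, rule endo_kernel_zero)
  moreover have "b \<in> FA" "top_coeff b = (0::'k)"
    using ab(3) by (simp add: TG0_def, rule top_coeff_TG0)
  ultimately show ?thesis
    using ab(1) by (simp add: top_coeff_add)
qed

lemma top_coeff_w_elt_nonzero:
  assumes "prime p" "2 < p" "CHAR('k::field) = p" "1 \<le> m"
  shows "top_coeff (w_elt p m :: 'k fa) \<noteq> 0"
proof -
  have two: "(2::'k) \<noteq> 0"
    using assms(2,3) by (simp add: two_nonzero_if_CHAR_gt_2)
  have "\<not> p dvd fact (p - 1)"
    using assms(1,2) by (simp add: prime_dvd_fact_iff)
  then have "\<not> CHAR('k) dvd fact (p - 1) ^ (2 * m)"
    using assms(1,3) prime_dvd_power by blast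
  then have "of_nat (fact (p - 1) ^ (2 * m)) * 2 ^ m \<noteq> (0::'k)"
    using two by (simp only: of_nat_eq_0_iff_char_dvd mult_eq_0_iff power_eq_0_iff) simp
  then show ?thesis
    using top_coeff_w_elt[OF _ two assms(4)] assms(2) by simp
qed

end

theorem corollary2p1:
  fixes p m :: nat
  assumes "prime p" and "p > 2" and "CHAR('k::field) = p" and "m \<ge> 1"
  shows "(w_elt p m :: 'k fa) \<notin> S2_plus_TG0"
proof
  assume "(w_elt p m :: 'k fa) \<in> S2_plus_TG0"
  moreover have "of_nat p = (0::'k)"
    using assms(3) by (metis of_nat_CHAR)
  moreover have "(2::'k) \<noteq> 0"
    using assms(2,3) by (simp add: two_nonzero_if_CHAR_gt_2)
  ultimately have "top_coeff m p (w_elt p m :: 'k fa) = 0"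
    using assms(2) by (intro top_coeff_S2_plus_TG0) auto
  with top_coeff_w_elt_nonzero[OF assms] show False
    by simp
qed

end
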